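(* Linear $\mathrm{HTA}_\pm$ and $\mathrm{CTL}_\pm$ are equivalent formalisms: for every linear $\mathrm{HTA}_\pm$ $\mathcal{A}$ over $\Sigma=2^{AP}$ there is a $\mathrm{CTL}_\pm$ formula $\varphi$ with $\mathcal{L}(\mathcal{A})=\mathcal{L}(\varphi)$, and for every $\mathrm{CTL}_\pm$ formula $\varphi$ over $AP$ there is a linear $\mathrm{HTA}_\pm$ $\mathcal{A}$ with $\mathcal{L}(\mathcal{A})=\mathcal{L}(\varphi)$.
   Context: Fix a finite set $AP$, $\Sigma=2^{AP}$; $\Sigma$-trees are unranked (finitely many children per node), unordered, leafless trees labelled by $\Sigma$. $\mathrm{CTL}_\pm$: $\varphi ::= p\mid\neg\varphi\mid\varphi\lor\varphi\mid\mathsf{D}^n\varphi\mid\mathsf{E}\mathsf{X}\varphi\mid\mathsf{E}(\varphi\,\mathsf{U}\,\varphi)$, evaluated at node $u$: $p$ iff $p\in t(u)$; Booleans usual; $\mathsf{D}^n\varphi$ iff $u$ has at least $n$ distinct children satisfying $\varphi$; $\mathsf{E}\mathsf{X}\varphi$ iff some child of $u$ satisfies $\varphi$; $\mathsf{E}(\varphi_1\mathsf{U}\varphi_2)$ iff some downward path $u=v_0,\dots,v_j$ has $v_j\models\varphi_2$ and $v_k\models\varphi_1$ for $k<j$. $\mathcal{L}(\varphi)$: trees whose root satisfies $\varphi$. An $\mathrm{HTA}_\pm$ is $\mathcal{A}=\langle Q,\Sigma,\delta,q_I,F\rangle$, $Q$ finite, $q_I\in Q$, $F\subseteq Q$, $\delta:Q\times\Sigma\to\mathcal{B}^+(\{\Diamond_k,\Box_k\}_{k\in\mathbb{N}}\times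 Q)$ (positive Boolean formulae with $\top,\bot,\land,\lor$ over atoms; $\Diamond=\Diamond_1$, $\Box=\Box_1$). A run on $t$ from $s$: tree $r$ labelled in $Q\times\mathrm{Dom}(t)$, root $(q_I,s)$, each node $x$ labelled $(q,v)$ satisfies $\delta(q,t(v))$ where $x\models(\Diamond_k,q')$ iff $x$ has children labelled $(q',v_1),\dots,(q',v_k)$ for pairwise distinct children $v_i$ of $v$, and $x\models(\Box_k,q')$ iff for all but at most $k-1$ children $v'$ of $v$ some child of $x$ is labelled $(q',v')$. Accepting: every infinite path of $r$ from its root has infinitely many nodes with state in $F$. $\mathcal{L}(\mathcal{A})$: trees with an accepting run from the root. Hesitant: $Q$ partitioned into nonempty components $Q_1,\dots,Q_n$, totally ordered so that if $q\in Q_i$, $q'\in Q_j$ and $q'$ occurs in $\delta(q,\sigma)$ then $j\le i$, each component being exactly one of: transient (no atom with state in $Q_i$ occurs in $\delta(q,\sigma)$, $q\in Q_i$); existential (such $Q_i$-atoms all of form $(\Diamond,q')$, at most one in each clause of the DNF of $\delta(q,\sigma)$); universal (all of form $(\Box,q')$, at most one in each clause of the CNF). Polarised: states of existential components are not in $F$, states of universal components are in $F$. Linear: every component is a singleton. *)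

theory Defs
  imports Main
begin

record 'l ltree =
  nodes :: "nat list set"
  label :: "nat list \<Rightarrow> 'l"

definition children :: "'l ltree \<Rightarrow> nat list \<Rightarrow> nat list set" where
  "children T u = {v \<in> nodes T. \<exists>i. v = u @ [i]}"

definition tree_domain :: "'l ltree \<Rightarrow> bool" where
  "tree_domain T \<longleftrightarrow> [] \<in> nodes T \<and> (\<forall>u i. u @ [i] \<in> nodes T \<longrightarrow> u \<in> nodes T)"

text \<open>Sigma-trees: unranked (finitely many children), leafless, labelled by 2^AP.
  Unorderedness: the order of child indices plays no role in any semantics below.\<close>
definition sigma_tree :: "'ap set ltree \<Rightarrow> bool" where
  "sigma_tree t \<longleftrightarrow> tree_domain t \<and>
     (\<forall>u \<in> nodes t. finite (children t u) \<and> children t u \<noteq> {})"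

datatype 'ap ctl =
    Prop 'ap
  | Neg "'ap ctl"
  | Or "'ap ctl" "'ap ctl"
  | Dn nat "'ap ctl"
  | EXn "'ap ctl"
  | EUn "'ap ctl" "'ap ctl"

primrec ctl_sat :: "'ap set ltree \<Rightarrow> nat list \<Rightarrow> 'ap ctl \<Rightarrow> bool" where
  "ctl_sat t u (Prop p) \<longleftrightarrow> p \<in> label t u"
| "ctl_sat t u (Neg \<phi>) \<longleftrightarrow> \<not> ctl_sat t u \<phi>"
| "ctl_sat t u (Or \<phi> \<psi>) \<longleftrightarrow> ctl_sat t u \<phi> \<or> ctl_sat t u \<psi>"
| "ctl_sat t u (Dn n \<phi>) \<longleftrightarrow> n \<le> card {v \<in> children t u. ctl_sat t v \<phi>}"
| "ctl_sat t u (EXn \<phi>) \<longleftrightarrow> (\<exists>v \<in> children t u. ctl_sat t v \<phi>)"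
| "ctl_sat t u (EUn \<phi> \<psi>) \<longleftrightarrow>
     (\<exists>(j::nat) (p::nat \<Rightarrow> nat list). p 0 = u \<and> (\<forall>k<j. p (Suc k) \<in> children t (p k))
        \<and> ctl_sat t (p j) \<psi> \<and> (\<forall>k<j. ctl_sat t (p k) \<phi>))"

definition ctl_lang :: "'ap ctl \<Rightarrow> 'ap set ltree set" where
  "ctl_lang \<phi> = {t. sigma_tree t \<and> ctl_sat t [] \<phi>}"

datatype 'a pbf = PTrue | PFalse | PAtom 'a | PAnd "'a pbf" "'a pbf" | POr "'a pbf" "'a pbf"

primrec peval :: "('a \<Rightarrow> bool) \<Rightarrow> 'a pbf \<Rightarrow> bool" where
  "peval I PTrue = True"
| "peval I PFalse = False"
| "peval I (PAtom a) = I a"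
| "peval I (PAnd f g) = (peval I f \<and> peval I g)"
| "peval I (POr f g) = (peval I f \<or> peval I g)"

primrec patoms :: "'a pbf \<Rightarrow> 'a set" where
  "patoms PTrue = {}"
| "patoms PFalse = {}"
| "patoms (PAtom a) = {a}"
| "patoms (PAnd f g) = patoms f \<union> patoms g"
| "patoms (POr f g) = patoms f \<union> patoms g"

primrec dnf :: "'a pbf \<Rightarrow> 'a set set" where
  "dnf PTrue = {{}}"
| "dnf PFalse = {}"
| "dnf (PAtom a) = {{a}}"
| "dnf (POr f g) = dnf f \<union> dnf g"
| "dnf (PAnd f g) = {c \<union> d | c d. c \<in> dnf f \<and> d \<in> dnf g}"

primrec cnf :: "'a pbf \<Rightarrow> 'a set set" where
  "cnf PTrue = {}"
| "cnf PFalse = {{}}"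
| "cnf (PAtom a) = {{a}}"
| "cnf (PAnd f g) = cnf f \<union> cnf g"
| "cnf (POr f g) = {c \<union> d | c d. c \<in> cnf f \<and> d \<in> cnf g}"

datatype 'q atom = Dia nat 'q | Box nat 'q

primrec atom_state :: "'q atom \<Rightarrow> 'q" where
  "atom_state (Dia k q) = q"
| "atom_state (Box k q) = q"

primrec atom_index :: "'q atom \<Rightarrow> nat" where
  "atom_index (Dia k q) = k"
| "atom_index (Box k q) = k"

record ('q, 'ap) hta =
  states :: "'q set"
  delta :: "'q \<Rightarrow> 'ap set \<Rightarrow> 'q atom pbf"
  init :: 'q
  acc :: "'q set"

primrec atom_holds ::
  "'ap set ltree \<Rightarrow> ('q \<times> nat list) ltree \<Rightarrow> nat list \<Rightarrow> nat list \<Rightarrow> 'q atom \<Rightarrow> bool" where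
  "atom_holds t r x v (Dia k q') \<longleftrightarrow>
     (\<exists>S. S \<subseteq> children t v \<and> finite S \<and> card S = k \<and>
          (\<forall>v'\<in>S. \<exists>y\<in>children r x. label r y = (q', v')))"
| "atom_holds t r x v (Box k q') \<longleftrightarrow>
     card {v' \<in> children t v. \<not> (\<exists>y\<in>children r x. label r y = (q', v'))} \<le> k - 1"

definition is_run :: "('q, 'ap) hta \<Rightarrow> 'ap set ltree \<Rightarrow> nat list \<Rightarrow> ('q \<times> nat list) ltree \<Rightarrow> bool" where
  "is_run A t s r \<longleftrightarrow> tree_domain r \<and> label r [] = (init A, s) \<and>
     (\<forall>x \<in> nodes r. fst (label r x) \<in> states A \<and> snd (label r x) \<in> nodes t \<and>
        peval (atom_holds t r x (snd (label r x)))
              (delta A (fst (label r x)) (label t (snd (label r x)))))"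

definition accepting :: "('q, 'ap) hta \<Rightarrow> ('q \<times> nat list) ltree \<Rightarrow> bool" where
  "accepting A r \<longleftrightarrow>
     (\<forall>p. p 0 = [] \<and> (\<forall>i. p (Suc i) \<in> children r (p i)) \<longrightarrow>
        infinite {i. fst (label r (p i)) \<in> acc A})"

definition hta_lang :: "('q, 'ap) hta \<Rightarrow> 'ap set ltree set" where
  "hta_lang A = {t. sigma_tree t \<and> (\<exists>r. is_run A t [] r \<and> accepting A r)}"

definition hta_wf :: "('q, 'ap) hta \<Rightarrow> bool" where
  "hta_wf A \<longleftrightarrow> finite (states A) \<and> init A \<in> states A \<and> acc A \<subseteq> states A \<and>
     (\<forall>q \<in> states A. \<forall>\<sigma>. \<forall>a \<in> patoms (delta A q \<sigma>).
        atom_state a \<in> states A \<and> 1 \<le> atom_index a)"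

datatype kind = Transient | Existential | Universal

text \<open>Linear (all components singletons), hesitant, polarised HTA.  The total order of
  the singleton components is given by an injective rank function.\<close>
definition linear_hta :: "('q, 'ap) hta \<Rightarrow> bool" where
  "linear_hta A \<longleftrightarrow> hta_wf A \<and>
    (\<exists>(rank :: 'q \<Rightarrow> nat) (kd :: 'q \<Rightarrow> kind).
       inj_on rank (states A) \<and>
       (\<forall>q \<in> states A. \<forall>\<sigma>. \<forall>a \<in> patoms (delta A q \<sigma>). rank (atom_state a) \<le> rank q) \<and>
       (\<forall>q \<in> states A.
          (kd q = Transient \<longrightarrow>
             (\<forall>\<sigma>. \<forall>a \<in> patoms (delta A q \<sigma>). atom_state a \<noteq> q)) \<and>
          (kd q = Existential \<longrightarrow>
             (\<forall>\<sigma>. (\<forall>a \<in> patoms (delta A q \<sigma>). atom_state a = q \<longrightarrow> a = Dia 1 q) \<and>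
                  (\<forall>c \<in> dnf (delta A q \<sigma>). card {a \<in> c. atom_state a = q} \<le> 1))
             \<and> q \<notin> acc A) \<and>
          (kd q = Universal \<longrightarrow>
             (\<forall>\<sigma>. (\<forall>a \<in> patoms (delta A q \<sigma>). atom_state a = q \<longrightarrow> a = Box 1 q) \<and>
                  (\<forall>c \<in> cnf (delta A q \<sigma>). card {a \<in> c. atom_state a = q} \<le> 1))
             \<and> q \<in> acc A)))"

end

theory Submission
  imports Defs "HOL-Library.Countable_Set"
begin

(*
  Fix a linear automaton and a tree, and let G q be the set of nodes from which state q has an
  accepting run.  A state only moves to states of lower rank or loops on itself, so G q is
  determined by the sets of lower rank: it is the set of nodes where the transition of q holds
  when its self-loop atom (<>q for an existential, []q for a universal state) refers back to
  G q, and it is the least such set for existential states (they reject) and the greatest one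
  for universal states (they accept).  Reading the self-loop atom as false or true turns the
  transition into formulas psi_F and psi_T, and the least and greatest solutions of
  X = psi_F | (psi_T & loop X) are E(psi_T U psi_F) and ~E(~psi_F U ~psi_F & ~psi_T); so every
  G q is CTL-definable, by recursion on the rank.  Conversely, a CTL formula is checked by the
  automaton whose states are its subformulas paired with a truth value: only until formulas
  refer back to themselves, existentially when asserted and universally when refuted.
*)

lemma peval_mono: "peval I f \<Longrightarrow> (\<And>a. a \<in> patoms f \<Longrightarrow> I a \<Longrightarrow> J a) \<Longrightarrow> peval J f"
  by (induction f) auto

lemma peval_cong: "(\<And>a. a \<in> patoms f \<Longrightarrow> I a = J a) \<Longrightarrow> peval I f = peval J f"
  by (induction f) auto

lemma peval_split_atom:
  assumes "\<And>a. a \<in> patoms f \<Longrightarrow> P a \<Longrightarrow> a = s"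
  shows "peval I f \<longleftrightarrow>
    peval (\<lambda>a. if P a then False else I a) f \<or> (I s \<and> peval (\<lambda>a. if P a then True else I a) f)"
proof (cases "I s")
  case True
  then have "peval I f = peval (\<lambda>a. if P a then True else I a) f"
    using assms by (intro peval_cong) auto
  moreover have "peval (\<lambda>a. if P a then False else I a) f \<Longrightarrow> peval (\<lambda>a. if P a then True else I a) f"
    by (erule peval_mono) auto
  ultimately show ?thesis using True by blast
next
  case False
  then have "peval I f = peval (\<lambda>a. if P a then False else I a) f"
    using assms by (intro peval_cong) auto
  then show ?thesis using False by blast
qed

lemma dnf_subset_patoms: "c \<in> dnf f \<Longrightarrow> c \<subseteq> patoms f"
  by (induction f arbitrary: c) auto

lemma cnf_subset_patoms: "c \<in> cnf f \<Longrightarrow> c \<subseteq> patoms f"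
  by (induction f arbitrary: c) auto

lemma card_filter_le_1: "{a \<in> c. P a} \<subseteq> {s} \<Longrightarrow> card {a \<in> c. P a} \<le> 1"
  using card_mono[of "{s}" "{a \<in> c. P a}"] by simp

lemma card_Int_ge_iff_subset:
  assumes "finite A"
  shows "(\<exists>S. S \<subseteq> A \<and> finite S \<and> card S = k \<and> S \<subseteq> B) \<longleftrightarrow> k \<le> card (A \<inter> B)"
proof
  assume "\<exists>S. S \<subseteq> A \<and> finite S \<and> card S = k \<and> S \<subseteq> B"
  then obtain S where "S \<subseteq> A \<inter> B" "card S = k" by blast
  then show "k \<le> card (A \<inter> B)" using assms by (metis card_mono finite_Int)
next
  assume "k \<le> card (A \<inter> B)"
  then obtain S where "S \<subseteq> A \<inter> B" "card S = k" "finite S" by (rule obtain_subset_with_card_n)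
  then show "\<exists>S. S \<subseteq> A \<and> finite S \<and> card S = k \<and> S \<subseteq> B" by blast
qed

lemma nonincreasing_nat_eventually_const:
  fixes f :: "nat \<Rightarrow> nat"
  assumes "\<And>i. f (Suc i) \<le> f i"
  obtains N where "\<And>i. N \<le> i \<Longrightarrow> f i = f N"
proof -
  obtain N where N: "f N = (LEAST y. y \<in> range f)" by (metis LeastI rangeE rangeI)
  have "f i = f N" if "N \<le> i" for i
  proof (rule antisym)
    show "f i \<le> f N" using that by (induction i rule: dec_induct) (auto intro: le_trans assms)
    show "f N \<le> f i" unfolding N by (rule Least_le) simp
  qed
  then show ?thesis using that by blast
qed

lemma tree_domain_take:
  assumes "tree_domain r" "x \<in> nodes r"
  shows "take k x \<in> nodes r"
  using assms(2)
proof (induction x arbitrary: k rule: rev_induct)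
  case (snoc i x)
  then have "x \<in> nodes r" using assms(1) unfolding tree_domain_def by blast
  then show ?case using snoc by (cases "k \<le> length x") auto
qed simp

lemma tree_domain_induct:
  assumes "tree_domain r" "x \<in> nodes r" "P []"
    and step: "\<And>x y. x \<in> nodes r \<Longrightarrow> y \<in> children r x \<Longrightarrow> P x \<Longrightarrow> P y"
  shows "P x"
  using assms(2)
proof (induction x rule: rev_induct)
  case (snoc i x)
  then have "x \<in> nodes r" using assms(1) unfolding tree_domain_def by blast
  then show ?case using snoc step unfolding children_def by blast
qed (use assms(3) in simp)

lemma children_in_nodes: "y \<in> children r x \<Longrightarrow> y \<in> nodes r"
  unfolding children_def by blast

lemma finite_children: "sigma_tree t \<Longrightarrow> v \<in> nodes t \<Longrightarrow> finite (children t v)"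
  unfolding sigma_tree_def by blast

lemma branch_into_closed_set:
  assumes r: "tree_domain r" and x0: "x0 \<in> B" and B: "B \<subseteq> nodes r"
    and closed: "\<And>x. x \<in> B \<Longrightarrow> \<exists>y\<in>children r x. y \<in> B"
  obtains p where "p 0 = []" "\<And>i. p (Suc i) \<in> children r (p i)" "\<And>i. length x0 \<le> i \<Longrightarrow> p i \<in> B"
proof -
  define P where "P i x \<longleftrightarrow> x \<in> nodes r \<and> (i \<le> length x0 \<longrightarrow> x = take i x0) \<and> (length x0 \<le> i \<longrightarrow> x \<in> B)"
    for i x
  have "\<exists>y. P (Suc i) y \<and> y \<in> children r x" if "P i x" for i x
  proof (cases "i < length x0")
    case True
    have "take (Suc i) x0 \<in> nodes r" using tree_domain_take r x0 B by blast
    moreover have "take (Suc i) x0 = x @ [x0 ! i]"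
      using that True by (simp add: P_def take_Suc_conv_app_nth)
    moreover have "length x0 \<le> Suc i \<Longrightarrow> take (Suc i) x0 \<in> B" using True x0 by simp
    ultimately show ?thesis using True
      by (intro exI[of _ "take (Suc i) x0"]) (auto simp: P_def children_def)
  next
    case False
    then show ?thesis using that closed B by (fastforce simp: P_def)
  qed
  moreover have "P 0 []" using tree_domain_take[OF r, of x0 0] x0 B by (auto simp: P_def)
  ultimately obtain p where "\<And>i. P i (p i) \<and> p (Suc i) \<in> children r (p i)"
    using dependent_nat_choice[of P "\<lambda>_ x y. y \<in> children r x"] by blast
  then show ?thesis using that[of p] by (simp add: P_def)
qed

text \<open>The child \<open>x @ [prod_encode (n, i)]\<close> of a node labelled \<open>(q, v)\<close> carries the state
  numbered \<open>n\<close> in \<open>Q\<close> and the tree node \<open>v @ [i]\<close>.\<close>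
lemma tree_unfolding:
  fixes R :: "'q \<Rightarrow> nat list \<Rightarrow> 'q \<Rightarrow> nat list \<Rightarrow> bool"
  assumes Q: "countable Q" and R: "\<And>q v q' v'. R q v q' v' \<Longrightarrow> q' \<in> Q \<and> (\<exists>i. v' = v @ [i])"
  obtains r :: "('q \<times> nat list) ltree" where "tree_domain r" "label r [] = z0"
    "\<And>x q v q' v'. x \<in> nodes r \<Longrightarrow> label r x = (q, v) \<Longrightarrow>
       (\<exists>y\<in>children r x. label r y = (q', v')) \<longleftrightarrow> R q v q' v'"
proof -
  define step where
    "step z j = (from_nat_into Q (fst (prod_decode j)), snd z @ [snd (prod_decode j)])"
    for z :: "'q \<times> nat list" and j
  define lab where "lab x = foldl step z0 x" for x
  define ok where "ok z j \<longleftrightarrow> R (fst z) (snd z) (fst (step z j)) (snd (step z j))" for z j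
  define N where "N = {x. \<forall>k < length x. ok (lab (take k x)) (x ! k)}"
  have N_snoc: "x @ [j] \<in> N \<longleftrightarrow> x \<in> N \<and> ok (lab x) j" for x j
    unfolding N_def by (auto simp: nth_append less_Suc_eq)
  have lab_snoc: "lab (x @ [j]) = step (lab x) j" for x j
    unfolding lab_def by simp
  let ?r = "\<lparr>nodes = N, label = lab\<rparr>"
  have "[] \<in> N" by (simp add: N_def)
  then have "tree_domain ?r" by (simp add: tree_domain_def N_snoc)
  moreover have "label ?r [] = z0" by (simp add: lab_def)
  moreover have "(\<exists>y\<in>children ?r x. label ?r y = (q', v')) \<longleftrightarrow> R q v q' v'"
    if "x \<in> nodes ?r" "label ?r x = (q, v)" for x q v q' v'
  proof
    assume "\<exists>y\<in>children ?r x. label ?r y = (q', v')"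
    then obtain j where "ok (lab x) j" "step (lab x) j = (q', v')"
      by (auto simp: children_def N_snoc lab_snoc)
    then show "R q v q' v'" using that by (simp add: ok_def)
  next
    assume qv: "R q v q' v'"
    then obtain i where "q' \<in> Q" "v' = v @ [i]" using R by blast
    then have "step (q, v) (prod_encode (to_nat_on Q q', i)) = (q', v')"
      using Q by (simp add: step_def)
    then show "\<exists>y\<in>children ?r x. label ?r y = (q', v')" using that qv
      by (intro bexI[of _ "x @ [prod_encode (to_nat_on Q q', i)]"])
        (auto simp: children_def N_snoc lab_snoc ok_def)
  qed
  ultimately show ?thesis using that by blast
qed

fun atom_sem :: "'ap set ltree \<Rightarrow> ('q \<Rightarrow> nat list set) \<Rightarrow> nat list \<Rightarrow> 'q atom \<Rightarrow> bool" where
  "atom_sem t G v (Dia k q) \<longleftrightarrow> k \<le> card (children t v \<inter> G q)"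
| "atom_sem t G v (Box k q) \<longleftrightarrow> card (children t v - G q) \<le> k - 1"

lemma atom_sem_fun_upd_other: "atom_state a \<noteq> q \<Longrightarrow> atom_sem t (G(q := X)) v a = atom_sem t G v a"
  by (cases a) auto

lemma atom_sem_mono:
  assumes "finite (children t v)" "children t v \<inter> G (atom_state a) \<subseteq> G' (atom_state a)"
    and "atom_sem t G v a"
  shows "atom_sem t G' v a"
proof (cases a)
  case (Dia k q)
  have "card (children t v \<inter> G q) \<le> card (children t v \<inter> G' q)"
    using assms(1,2) Dia by (intro card_mono) auto
  then show ?thesis using assms(3) Dia by simp
next
  case (Box k q)
  have "card (children t v - G' q) \<le> card (children t v - G q)"
    using assms(1,2) Box by (intro card_mono) auto
  then show ?thesis using assms(3) Box by simp
qed

lemma peval_atom_sem_mono: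
  assumes "finite (children t v)"
    and "\<And>a. a \<in> patoms f \<Longrightarrow> children t v \<inter> G (atom_state a) \<subseteq> G' (atom_state a)"
    and "peval (atom_sem t G v) f"
  shows "peval (atom_sem t G' v) f"
  using assms(3) by (rule peval_mono) (use assms(1,2) atom_sem_mono in blast)

lemma atom_sem_Dia1: "finite (children t v) \<Longrightarrow> atom_sem t G v (Dia 1 q) \<longleftrightarrow> (\<exists>c\<in>children t v. c \<in> G q)"
  by (auto simp: Suc_le_eq card_gt_0_iff)

lemma atom_sem_Box1: "finite (children t v) \<Longrightarrow> atom_sem t G v (Box 1 q) \<longleftrightarrow> children t v \<subseteq> G q"
  by auto

definition run_succ :: "('q \<times> nat list) ltree \<Rightarrow> nat list \<Rightarrow> 'q \<Rightarrow> nat list set" where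
  "run_succ r x q = {v. \<exists>y\<in>children r x. label r y = (q, v)}"

definition visited :: "('q \<times> nat list) ltree \<Rightarrow> 'q \<Rightarrow> nat list set" where
  "visited r q = {v. \<exists>x\<in>nodes r. label r x = (q, v)}"

lemma run_succ_subset_visited: "x \<in> nodes r \<Longrightarrow> run_succ r x q \<subseteq> visited r q"
  unfolding run_succ_def visited_def using children_in_nodes by blast

lemma atom_holds_iff_atom_sem:
  assumes "finite (children t v)"
  shows "atom_holds t r x v a \<longleftrightarrow> atom_sem t (run_succ r x) v a"
proof (cases a)
  case (Dia k q)
  then show ?thesis using card_Int_ge_iff_subset[OF assms, of k "run_succ r x q"]
    by (simp add: run_succ_def subset_eq)
next
  case (Box k q)
  then show ?thesis by (simp add: run_succ_def set_diff_eq)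
qed

locale ranked_hta =
  fixes A :: "('q, 'ap) hta" and rank :: "'q \<Rightarrow> nat" and kd :: "'q \<Rightarrow> kind"
  assumes wf: "hta_wf A"
    and rank_inj: "inj_on rank (states A)"
    and rank_mono: "\<And>q \<sigma> a. q \<in> states A \<Longrightarrow> a \<in> patoms (delta A q \<sigma>) \<Longrightarrow> rank (atom_state a) \<le> rank q"
    and transient_loop_free: "\<And>q \<sigma> a. q \<in> states A \<Longrightarrow> kd q = Transient \<Longrightarrow>
      a \<in> patoms (delta A q \<sigma>) \<Longrightarrow> atom_state a \<noteq> q"
    and existential_loop: "\<And>q \<sigma> a. q \<in> states A \<Longrightarrow> kd q = Existential \<Longrightarrow>
      a \<in> patoms (delta A q \<sigma>) \<Longrightarrow> atom_state a = q \<Longrightarrow> a = Dia 1 q"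
    and existential_rejecting: "\<And>q. q \<in> states A \<Longrightarrow> kd q = Existential \<Longrightarrow> q \<notin> acc A"
    and universal_loop: "\<And>q \<sigma> a. q \<in> states A \<Longrightarrow> kd q = Universal \<Longrightarrow>
      a \<in> patoms (delta A q \<sigma>) \<Longrightarrow> atom_state a = q \<Longrightarrow> a = Box 1 q"
    and universal_accepting: "\<And>q. q \<in> states A \<Longrightarrow> kd q = Universal \<Longrightarrow> q \<in> acc A"

lemma linear_hta_imp_ranked_hta: "linear_hta A \<Longrightarrow> \<exists>rank kd. ranked_hta A rank kd"
  unfolding linear_hta_def
proof (elim conjE exE, goal_cases)
  case (1 rank kd)
  have "ranked_hta A rank kd" by unfold_locales (use 1 in blast)+
  then show ?case by blast
qed

context ranked_hta
begin

lemma finite_states: "finite (states A)"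
  using wf unfolding hta_wf_def by (elim conjE)

lemma atom_in_states: "q \<in> states A \<Longrightarrow> a \<in> patoms (delta A q \<sigma>) \<Longrightarrow> atom_state a \<in> states A"
  using wf unfolding hta_wf_def by blast

lemma atom_index_pos: "q \<in> states A \<Longrightarrow> a \<in> patoms (delta A q \<sigma>) \<Longrightarrow> 1 \<le> atom_index a"
  using wf unfolding hta_wf_def by blast

definition loop_atom :: "'q \<Rightarrow> 'q atom" where
  "loop_atom q = (if kd q = Existential then Dia 1 q else Box 1 q)"

lemma self_atom_eq_loop_atom:
  "q \<in> states A \<Longrightarrow> a \<in> patoms (delta A q \<sigma>) \<Longrightarrow> atom_state a = q \<Longrightarrow> a = loop_atom q"
  using transient_loop_free existential_loop universal_loop
  by (cases "kd q") (auto simp: loop_atom_def)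

lemma atom_sem_loop_atom:
  assumes "finite (children t v)"
  shows "atom_sem t G v (loop_atom q) \<longleftrightarrow>
    (if kd q = Existential then \<exists>c\<in>children t v. c \<in> G q else children t v \<subseteq> G q)"
  unfolding loop_atom_def
  by (cases "kd q = Existential")
    (simp_all only: simp_thms if_True if_False atom_sem_Dia1[OF assms] atom_sem_Box1[OF assms])

lemma rank_less:
  "q \<in> states A \<Longrightarrow> a \<in> patoms (delta A q \<sigma>) \<Longrightarrow> atom_state a \<noteq> q \<Longrightarrow> rank (atom_state a) < rank q"
  by (metis atom_in_states inj_onD le_neq_implies_less rank_inj rank_mono)

lemma linear_hta_if_single_loop_clauses:
  assumes "\<And>q \<sigma> c. q \<in> states A \<Longrightarrow> kd q = Existential \<Longrightarrow> c \<in> dnf (delta A q \<sigma>) \<Longrightarrow>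
      card {a \<in> c. atom_state a = q} \<le> 1"
    and "\<And>q \<sigma> c. q \<in> states A \<Longrightarrow> kd q = Universal \<Longrightarrow> c \<in> cnf (delta A q \<sigma>) \<Longrightarrow>
      card {a \<in> c. atom_state a = q} \<le> 1"
  shows "linear_hta A"
  unfolding linear_hta_def
  by (intro conjI exI[of _ rank] exI[of _ kd] wf rank_inj ballI allI impI)
    (fact assms rank_mono transient_loop_free existential_loop universal_loop
      existential_rejecting universal_accepting)+

end

section \<open>Accepting runs as fixpoints\<close>

text \<open>\<open>G q\<close> is intended to be the set of nodes from which \<open>q\<close> accepts: a fixpoint of the
  transitions, least at existential states (witnessed by a ranking that decreases along the
  self-loop) and greatest at universal states.\<close>
locale hta_annotation = ranked_hta A rank kd
  for A :: "('q, 'ap) hta" and rank kd +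
  fixes t :: "'ap set ltree" and G :: "'q \<Rightarrow> nat list set"
  assumes sigma_tree: "sigma_tree t"
    and annotation_fixpoint: "\<And>q v. q \<in> states A \<Longrightarrow> v \<in> nodes t \<Longrightarrow>
      v \<in> G q \<longleftrightarrow> peval (atom_sem t G v) (delta A q (label t v))"
    and existential_ranking: "\<And>q. q \<in> states A \<Longrightarrow> kd q = Existential \<Longrightarrow>
      \<exists>lev :: nat list \<Rightarrow> nat. \<forall>v\<in>nodes t. v \<in> G q \<longrightarrow>
        peval (atom_sem t (G(q := {u \<in> G q. lev u < lev v})) v) (delta A q (label t v))"
    and universal_coinduct: "\<And>q X. q \<in> states A \<Longrightarrow> kd q = Universal \<Longrightarrow> X \<subseteq> nodes t \<Longrightarrow>
      (\<forall>v\<in>X. peval (atom_sem t (G(q := X)) v) (delta A q (label t v))) \<Longrightarrow> X \<subseteq> G q"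
begin

lemma finite_children_t: "v \<in> nodes t \<Longrightarrow> finite (children t v)"
  using finite_children sigma_tree by blast

context
  fixes s and r :: "('q \<times> nat list) ltree"
  assumes run: "is_run A t s r"
begin

lemma run_node:
  assumes "x \<in> nodes r" "label r x = (q, v)"
  shows "q \<in> states A" "v \<in> nodes t" "peval (atom_sem t (run_succ r x) v) (delta A q (label t v))"
proof -
  have node: "fst (label r x) \<in> states A \<and> snd (label r x) \<in> nodes t \<and>
    peval (atom_holds t r x (snd (label r x)))
      (delta A (fst (label r x)) (label t (snd (label r x))))"
    using run assms(1) unfolding is_run_def by blast
  then show "q \<in> states A" "v \<in> nodes t" using assms(2) by simp_all
  from node have "peval (atom_holds t r x v) (delta A q (label t v))" "v \<in> nodes t"
    using assms(2) by simp_all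
  then show "peval (atom_sem t (run_succ r x) v) (delta A q (label t v))"
    by (auto elim!: peval_mono simp: atom_holds_iff_atom_sem finite_children_t)
qed

lemma run_node_annotated:
  assumes lower: "\<And>q'. q' \<in> states A \<Longrightarrow> rank q' < rank q \<Longrightarrow> visited r q' \<subseteq> G q'"
    and x: "x \<in> nodes r" "label r x = (q, v)"
  shows "peval (atom_sem t (G(q := run_succ r x q)) v) (delta A q (label t v))"
proof (rule peval_atom_sem_mono[OF _ _ run_node(3)[OF x]])
  show "finite (children t v)" using finite_children_t run_node(2)[OF x] .
  fix a assume a: "a \<in> patoms (delta A q (label t v))"
  show "children t v \<inter> run_succ r x (atom_state a) \<subseteq> (G(q := run_succ r x q)) (atom_state a)"
  proof (cases "atom_state a = q")
    case False
    then have "visited r (atom_state a) \<subseteq> G (atom_state a)"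
      using lower atom_in_states rank_less a run_node(1)[OF x] by blast
    then show ?thesis using run_succ_subset_visited[OF x(1)] False by auto
  qed simp
qed

context
  fixes q
  assumes lower: "\<And>q'. q' \<in> states A \<Longrightarrow> rank q' < rank q \<Longrightarrow> visited r q' \<subseteq> G q'"
    and q: "q \<in> states A"
begin

lemma visited_transient:
  assumes "kd q = Transient"
  shows "visited r q \<subseteq> G q"
proof
  fix v assume "v \<in> visited r q"
  then obtain x where x: "x \<in> nodes r" "label r x = (q, v)" unfolding visited_def by blast
  have "peval (atom_sem t G v) (delta A q (label t v))"
    using run_node_annotated[OF lower x]
  proof (rule peval_mono)
    fix a assume "a \<in> patoms (delta A q (label t v))" "atom_sem t (G(q := run_succ r x q)) v a"
    then show "atom_sem t G v a"
      using transient_loop_free[OF q assms] by (simp add: atom_sem_fun_upd_other)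
  qed
  then show "v \<in> G q" using annotation_fixpoint q run_node(2)[OF x] by blast
qed

lemma visited_universal:
  assumes "kd q = Universal"
  shows "visited r q \<subseteq> G q"
proof (rule universal_coinduct[OF q assms])
  show "visited r q \<subseteq> nodes t" using run_node(2) unfolding visited_def by blast
  show "\<forall>v\<in>visited r q. peval (atom_sem t (G(q := visited r q)) v) (delta A q (label t v))"
  proof
    fix v assume "v \<in> visited r q"
    then obtain x where x: "x \<in> nodes r" "label r x = (q, v)" unfolding visited_def by blast
    show "peval (atom_sem t (G(q := visited r q)) v) (delta A q (label t v))"
      by (rule peval_atom_sem_mono[OF finite_children_t[OF run_node(2)[OF x]] _
            run_node_annotated[OF lower x]])
        (use run_succ_subset_visited[OF x(1)] in auto)
  qed
qed

text \<open>A node of \<open>r\<close> in state \<open>q\<close> outside \<open>G q\<close> has, by the fixpoint property, a child with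
  the same property; this yields a branch that ends up in the rejecting state \<open>q\<close> for good.\<close>
lemma visited_existential:
  assumes "kd q = Existential" and acc: "accepting A r"
  shows "visited r q \<subseteq> G q"
proof (rule ccontr)
  define B where "B = {x \<in> nodes r. \<exists>v. label r x = (q, v) \<and> v \<notin> G q}"
  have closed: "\<exists>y\<in>children r x. y \<in> B" if xB: "x \<in> B" for x
  proof (rule ccontr)
    assume no_child: "\<not> (\<exists>y\<in>children r x. y \<in> B)"
    obtain v where x: "x \<in> nodes r" "label r x = (q, v)" and "v \<notin> G q"
      using xB unfolding B_def by blast
    have "run_succ r x q \<subseteq> G q"
      using no_child children_in_nodes unfolding run_succ_def B_def by blast
    then have "peval (atom_sem t G v) (delta A q (label t v))"
      by (intro peval_atom_sem_mono[OF finite_children_t[OF run_node(2)[OF x]] _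
            run_node_annotated[OF lower x]]) auto
    then show False using annotation_fixpoint q run_node(2)[OF x] \<open>v \<notin> G q\<close> by blast
  qed
  assume "\<not> visited r q \<subseteq> G q"
  then obtain x0 where "x0 \<in> B" unfolding visited_def B_def by blast
  moreover have "tree_domain r" using run unfolding is_run_def by blast
  ultimately obtain p where p: "p 0 = []" "\<And>i. p (Suc i) \<in> children r (p i)"
    "\<And>i. length x0 \<le> i \<Longrightarrow> p i \<in> B"
    using branch_into_closed_set[of r x0 B] closed unfolding B_def by blast
  have "fst (label r (p i)) \<notin> acc A" if "length x0 \<le> i" for i
    using p(3)[OF that] existential_rejecting[OF q assms(1)] unfolding B_def by auto
  then have "{i. fst (label r (p i)) \<in> acc A} \<subseteq> {..<length x0}"
    by (auto simp: not_less[symmetric])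
  then have "finite {i. fst (label r (p i)) \<in> acc A}" using finite_subset by blast
  then show False using acc p(1,2) unfolding accepting_def by blast
qed

end

lemma visited_subset_annotation:
  assumes "accepting A r" "q \<in> states A"
  shows "visited r q \<subseteq> G q"
  using assms(2)
proof (induction "rank q" arbitrary: q rule: less_induct)
  case less
  then have "\<And>q'. q' \<in> states A \<Longrightarrow> rank q' < rank q \<Longrightarrow> visited r q' \<subseteq> G q'" by blast
  then show ?case
    using visited_transient visited_existential[OF _ _ _ assms(1)] visited_universal less.prems
    by (cases "kd q") blast+
qed

end

definition existential_rank :: "'q \<Rightarrow> nat list \<Rightarrow> nat" where
  "existential_rank q = (SOME lev. \<forall>v\<in>nodes t. v \<in> G q \<longrightarrow>
     peval (atom_sem t (G(q := {u \<in> G q. lev u < lev v})) v) (delta A q (label t v)))"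

lemma existential_rank:
  assumes "q \<in> states A" "kd q = Existential" "v \<in> nodes t" "v \<in> G q"
  shows "peval (atom_sem t (G(q := {u \<in> G q. existential_rank q u < existential_rank q v})) v)
    (delta A q (label t v))"
  using someI_ex[OF existential_ranking[OF assms(1,2)]] assms(3,4)
  unfolding existential_rank_def by blast

text \<open>Requiring the ranking to decrease along existential self-loops keeps every branch of the
  run built from \<open>G\<close> from staying in an existential, rejecting state.\<close>
definition run_step :: "'q \<Rightarrow> nat list \<Rightarrow> 'q \<Rightarrow> nat list \<Rightarrow> bool" where
  "run_step q v q' v' \<longleftrightarrow> q \<in> states A \<and> q' \<in> atom_state ` patoms (delta A q (label t v)) \<and>
     v' \<in> children t v \<inter> G q' \<and>
     (q' = q \<and> kd q = Existential \<longrightarrow> existential_rank q v' < existential_rank q v)"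

lemma run_step_transition:
  assumes q: "q \<in> states A" and v: "v \<in> nodes t" "v \<in> G q"
    and succ: "\<And>q' v'. run_step q v q' v' \<Longrightarrow> v' \<in> S q'"
  shows "peval (atom_sem t S v) (delta A q (label t v))"
proof (cases "kd q = Existential")
  case True
  show ?thesis
    by (rule peval_atom_sem_mono[OF finite_children_t[OF v(1)] _ existential_rank[OF q True v]])
      (use succ q in \<open>auto simp: run_step_def\<close>)
next
  case False
  show ?thesis
    by (rule peval_atom_sem_mono[OF finite_children_t[OF v(1)] _
          annotation_fixpoint[THEN iffD1, OF q v]])
      (use succ q False in \<open>auto simp: run_step_def\<close>)
qed

lemma run_step_chain_accepting:
  assumes steps: "\<And>i. run_step (qs i) (vs i) (qs (Suc i)) (vs (Suc i))"
  shows "infinite {i. qs i \<in> acc A}"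
proof -
  have states: "qs i \<in> states A"
    and loop: "qs (Suc i) \<in> atom_state ` patoms (delta A (qs i) (label t (vs i)))" for i
    using steps[of i] unfolding run_step_def by blast+
  have "rank (qs (Suc i)) \<le> rank (qs i)" for i
    using loop[of i] rank_mono[OF states[of i]] by force
  then obtain N where N: "\<And>i. N \<le> i \<Longrightarrow> rank (qs i) = rank (qs N)"
    using nonincreasing_nat_eventually_const[of "\<lambda>i. rank (qs i)"] by blast
  define q where "q = qs N"
  have q: "q \<in> states A" unfolding q_def by (rule states)
  have qs_q: "qs i = q" if "N \<le> i" for i
    unfolding q_def by (rule inj_onD[OF rank_inj N[OF that] states states])
  obtain a where "a \<in> patoms (delta A q (label t (vs N)))" "atom_state a = q"
    using loop[of N] qs_q[of "Suc N"] unfolding q_def by auto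
  then have "kd q \<noteq> Transient" using transient_loop_free[OF q] by blast
  moreover have "kd q \<noteq> Existential"
  proof
    assume E: "kd q = Existential"
    have "existential_rank q (vs (Suc i)) < existential_rank q (vs i)" if "N \<le> i" for i
    proof -
      have "run_step q (vs i) q (vs (Suc i))" using steps[of i] qs_q[of i] qs_q[of "Suc i"] that
        by simp
      then show ?thesis using E unfolding run_step_def by blast
    qed
    then have "\<exists>f. \<forall>i. (f (Suc i), f i) \<in> less_than"
      by (intro exI[of _ "\<lambda>i. existential_rank q (vs (N + i))"]) simp
    then show False using wf_less_than unfolding wf_iff_no_infinite_down_chain by blast
  qed
  ultimately have "q \<in> acc A" using universal_accepting[OF q] by (cases "kd q") simp_all
  then have "{N..} \<subseteq> {i. qs i \<in> acc A}" using qs_q by auto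
  then show ?thesis using infinite_Ici infinite_super by blast
qed

context
  fixes r :: "('q \<times> nat list) ltree"
  assumes r_domain: "tree_domain r" and r_root: "label r [] = (init A, [])"
    and r_steps: "\<And>x q v q' v'. x \<in> nodes r \<Longrightarrow> label r x = (q, v) \<Longrightarrow>
      (\<exists>y\<in>children r x. label r y = (q', v')) \<longleftrightarrow> run_step q v q' v'"
    and root: "[] \<in> G (init A)"
begin

lemma run_step_tree_label:
  assumes "x \<in> nodes r"
  shows "label r x \<in> (SIGMA q:states A. nodes t \<inter> G q)"
  using r_domain assms
proof (rule tree_domain_induct)
  show "label r [] \<in> (SIGMA q:states A. nodes t \<inter> G q)"
    using r_root root wf sigma_tree unfolding hta_wf_def sigma_tree_def tree_domain_def by simp
  fix x y assume "x \<in> nodes r" "y \<in> children r x"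
  moreover obtain q v q' v' where "label r x = (q, v)" "label r y = (q', v')" by fastforce
  ultimately have "run_step q v q' v'" and y: "label r y = (q', v')" using r_steps by blast+
  then show "label r y \<in> (SIGMA q:states A. nodes t \<inter> G q)"
    unfolding run_step_def by (auto intro: atom_in_states children_in_nodes)
qed

lemma run_step_tree_is_run: "is_run A t [] r"
  unfolding is_run_def
proof (intro conjI ballI r_domain r_root)
  fix x assume x: "x \<in> nodes r"
  obtain q v where qv: "label r x = (q, v)" by fastforce
  then have q: "q \<in> states A" and v: "v \<in> nodes t" "v \<in> G q" using run_step_tree_label[OF x] by auto
  have "peval (atom_sem t (run_succ r x) v) (delta A q (label t v))"
    using r_steps[OF x qv] by (intro run_step_transition[OF q v]) (auto simp: run_succ_def)
  then show "peval (atom_holds t r x (snd (label r x)))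
    (delta A (fst (label r x)) (label t (snd (label r x))))"
    using qv v by (auto elim!: peval_mono simp: atom_holds_iff_atom_sem finite_children_t)
  show "fst (label r x) \<in> states A" "snd (label r x) \<in> nodes t" using q v qv by auto
qed

lemma run_step_tree_accepting: "accepting A r"
  unfolding accepting_def
proof (intro allI impI)
  fix p assume p: "p 0 = [] \<and> (\<forall>i. p (Suc i) \<in> children r (p i))"
  then have "p i \<in> nodes r" for i
    using r_domain children_in_nodes by (cases i) (auto simp: tree_domain_def)
  then have "run_step (fst (label r (p i))) (snd (label r (p i)))
      (fst (label r (p (Suc i)))) (snd (label r (p (Suc i))))" for i
    using r_steps[of "p i" "fst (label r (p i))" "snd (label r (p i))"
        "fst (label r (p (Suc i)))" "snd (label r (p (Suc i)))"] p by auto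
  then show "infinite {i. fst (label r (p i)) \<in> acc A}" by (rule run_step_chain_accepting)
qed

end

lemma accepting_run_exists:
  assumes root: "[] \<in> G (init A)"
  shows "\<exists>r. is_run A t [] r \<and> accepting A r"
proof -
  obtain r :: "('q \<times> nat list) ltree" where r: "tree_domain r" "label r [] = (init A, [])"
    and steps: "\<And>x q v q' v'. x \<in> nodes r \<Longrightarrow> label r x = (q, v) \<Longrightarrow>
      (\<exists>y\<in>children r x. label r y = (q', v')) \<longleftrightarrow> run_step q v q' v'"
  proof (rule tree_unfolding[of "states A" run_step "(init A, [])"])
    show "countable (states A)" using countable_finite finite_states .
    fix q v q' v' assume "run_step q v q' v'"
    then obtain a where "q \<in> states A" "a \<in> patoms (delta A q (label t v))" "q' = atom_state a"
      "v' \<in> children t v"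
      unfolding run_step_def by blast
    then show "q' \<in> states A \<and> (\<exists>i. v' = v @ [i])"
      using atom_in_states unfolding children_def by blast
  qed (rule that)
  then show ?thesis
    using run_step_tree_is_run[OF r steps root] run_step_tree_accepting[OF r steps root] by blast
qed

theorem accepting_run_iff: "(\<exists>r. is_run A t [] r \<and> accepting A r) \<longleftrightarrow> [] \<in> G (init A)"
proof
  assume "\<exists>r. is_run A t [] r \<and> accepting A r"
  then obtain r where r: "is_run A t [] r" "accepting A r" by blast
  then have "[] \<in> nodes r" "label r [] = (init A, [])"
    unfolding is_run_def tree_domain_def by auto
  then have "[] \<in> visited r (init A)" unfolding visited_def by blast
  then show "[] \<in> G (init A)"
    using visited_subset_annotation[OF r] wf unfolding hta_wf_def by blast
qed (rule accepting_run_exists)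

end

definition ctl_true :: "'ap ctl" where "ctl_true = Dn 0 (Prop undefined)"

definition ctl_false :: "'ap ctl" where "ctl_false = Neg ctl_true"

definition ctl_and :: "'ap ctl \<Rightarrow> 'ap ctl \<Rightarrow> 'ap ctl" where
  "ctl_and \<phi> \<psi> = Neg (Or (Neg \<phi>) (Neg \<psi>))"

definition ctl_Ors :: "'ap ctl list \<Rightarrow> 'ap ctl" where "ctl_Ors \<phi>s = foldr Or \<phi>s ctl_false"

definition ctl_Ands :: "'ap ctl list \<Rightarrow> 'ap ctl" where "ctl_Ands \<phi>s = foldr ctl_and \<phi>s ctl_true"

lemma ctl_sat_true [simp]: "ctl_sat t v ctl_true"
  and ctl_sat_false [simp]: "\<not> ctl_sat t v ctl_false"
  and ctl_sat_and [simp]: "ctl_sat t v (ctl_and \<phi> \<psi>) \<longleftrightarrow> ctl_sat t v \<phi> \<and> ctl_sat t v \<psi>"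
  by (simp_all add: ctl_true_def ctl_false_def ctl_and_def)

lemma ctl_sat_Ors [simp]: "ctl_sat t v (ctl_Ors \<phi>s) \<longleftrightarrow> (\<exists>\<phi>\<in>set \<phi>s. ctl_sat t v \<phi>)"
  by (induction \<phi>s) (simp_all add: ctl_Ors_def)

lemma ctl_sat_Ands_map: "ctl_sat t v (ctl_Ands (map f xs)) \<longleftrightarrow> (\<forall>x\<in>set xs. ctl_sat t v (f x))"
  by (induction xs) (simp_all add: ctl_Ands_def)

definition univ_list :: "'a::finite list" where "univ_list = (SOME xs. set xs = UNIV)"

lemma set_univ_list [simp]: "set (univ_list :: 'a::finite list) = UNIV"
  unfolding univ_list_def by (rule someI_ex) (rule finite_list[OF finite_UNIV])

definition ctl_label :: "'ap::finite set \<Rightarrow> 'ap ctl" where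
  "ctl_label \<sigma> = ctl_Ands (map (\<lambda>p. if p \<in> \<sigma> then Prop p else Neg (Prop p)) univ_list)"

lemma ctl_sat_label [simp]: "ctl_sat t v (ctl_label \<sigma>) \<longleftrightarrow> label t v = \<sigma>"
  unfolding ctl_label_def ctl_sat_Ands_map set_univ_list by (auto simp: set_eq_iff split: if_splits)

definition ctl_label_case :: "('ap::finite set \<Rightarrow> 'ap ctl) \<Rightarrow> 'ap ctl" where
  "ctl_label_case F = ctl_Ors (map (\<lambda>\<sigma>. ctl_and (ctl_label \<sigma>) (F \<sigma>)) univ_list)"

lemma ctl_sat_label_case [simp]: "ctl_sat t v (ctl_label_case F) \<longleftrightarrow> ctl_sat t v (F (label t v))"
  by (auto simp: ctl_label_case_def)

fun atom_ctl :: "('q \<Rightarrow> 'ap ctl) \<Rightarrow> 'q atom \<Rightarrow> 'ap ctl" where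
  "atom_ctl M (Dia k q) = Dn k (M q)"
| "atom_ctl M (Box k q) = Neg (Dn k (Neg (M q)))"

lemma atom_ctl_cong: "M (atom_state a) = M' (atom_state a) \<Longrightarrow> atom_ctl M a = atom_ctl M' a"
  by (cases a) simp_all

lemma ctl_sat_atom_ctl:
  assumes "finite (children t v)" "1 \<le> atom_index a"
  shows "ctl_sat t v (atom_ctl M a) \<longleftrightarrow> atom_sem t (\<lambda>q. {u. ctl_sat t u (M q)}) v a"
proof (cases a)
  case (Dia k q)
  then show ?thesis by (simp add: Int_def)
next
  case (Box k q)
  have "{u \<in> children t v. \<not> ctl_sat t u (M q)} = children t v - {u. ctl_sat t u (M q)}" by blast
  then show ?thesis using Box assms(2) by auto
qed

primrec pbf_ctl :: "('a \<Rightarrow> 'ap ctl) \<Rightarrow> 'a pbf \<Rightarrow> 'ap ctl" where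
  "pbf_ctl T PTrue = ctl_true"
| "pbf_ctl T PFalse = ctl_false"
| "pbf_ctl T (PAtom a) = T a"
| "pbf_ctl T (PAnd f g) = ctl_and (pbf_ctl T f) (pbf_ctl T g)"
| "pbf_ctl T (POr f g) = Or (pbf_ctl T f) (pbf_ctl T g)"

lemma ctl_sat_pbf_ctl [simp]: "ctl_sat t v (pbf_ctl T f) \<longleftrightarrow> peval (\<lambda>a. ctl_sat t v (T a)) f"
  by (induction f) simp_all

lemma pbf_ctl_cong: "(\<And>a. a \<in> patoms f \<Longrightarrow> T a = T' a) \<Longrightarrow> pbf_ctl T f = pbf_ctl T' f"
  by (induction f) simp_all

section \<open>Until as a fixpoint\<close>

primrec eu_within :: "'ap set ltree \<Rightarrow> 'ap ctl \<Rightarrow> 'ap ctl \<Rightarrow> nat \<Rightarrow> nat list \<Rightarrow> bool" where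
  "eu_within t \<phi> \<psi> 0 v \<longleftrightarrow> ctl_sat t v \<psi>"
| "eu_within t \<phi> \<psi> (Suc j) v \<longleftrightarrow>
     ctl_sat t v \<psi> \<or> (ctl_sat t v \<phi> \<and> (\<exists>c\<in>children t v. eu_within t \<phi> \<psi> j c))"

lemma eu_within_path:
  assumes "\<forall>k<j. p (Suc k) \<in> children t (p k)" "ctl_sat t (p j) \<psi>" "\<forall>k<j. ctl_sat t (p k) \<phi>"
  shows "eu_within t \<phi> \<psi> j (p 0)"
proof -
  have "eu_within t \<phi> \<psi> n (p (j - n))" if "n \<le> j" for n
    using that
  proof (induction n)
    case (Suc n)
    define k where "k = j - Suc n"
    have k: "k < j" "Suc k = j - n" using Suc.prems unfolding k_def by auto
    have "p (j - n) \<in> children t (p k)" using assms(1) k by metis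
    moreover have "ctl_sat t (p k) \<phi>" using assms(3) k(1) by blast
    ultimately show ?case using Suc by (auto simp: k_def)
  qed (simp add: assms(2))
  from this[of j] show ?thesis by simp
qed

lemma EUn_if_eu_within: "eu_within t \<phi> \<psi> j v \<Longrightarrow> ctl_sat t v (EUn \<phi> \<psi>)"
proof (induction j arbitrary: v)
  case 0
  then show ?case by (auto intro!: exI[of _ 0])
next
  case (Suc j)
  show ?case
  proof (cases "ctl_sat t v \<psi>")
    case True
    then show ?thesis by (auto intro!: exI[of _ 0])
  next
    case False
    then obtain c where c: "c \<in> children t v" "ctl_sat t v \<phi>" "ctl_sat t c (EUn \<phi> \<psi>)"
      using Suc by auto
    then obtain i p where "p 0 = c" "\<forall>k<i. p (Suc k) \<in> children t (p k)"
      "ctl_sat t (p i) \<psi>" "\<forall>k<i. ctl_sat t (p k) \<phi>"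
      by auto
    then show ?thesis using c(1,2)
      by (auto intro!: exI[of _ "Suc i"] exI[of _ "\<lambda>k. if k = 0 then v else p (k - 1)"]
          simp: less_Suc_eq_0_disj)
  qed
qed

lemma ctl_sat_EUn_iff_eu_within: "ctl_sat t v (EUn \<phi> \<psi>) \<longleftrightarrow> (\<exists>j. eu_within t \<phi> \<psi> j v)"
proof
  assume "ctl_sat t v (EUn \<phi> \<psi>)"
  then obtain j p where "p 0 = v" "\<forall>k<j. p (Suc k) \<in> children t (p k)"
    "ctl_sat t (p j) \<psi>" "\<forall>k<j. ctl_sat t (p k) \<phi>"
    by auto
  then show "\<exists>j. eu_within t \<phi> \<psi> j v" using eu_within_path by metis
qed (use EUn_if_eu_within in blast)

declare ctl_sat.simps(6) [simp del]

lemma ctl_sat_EUn_unfold: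
  "ctl_sat t v (EUn \<phi> \<psi>) \<longleftrightarrow>
     ctl_sat t v \<psi> \<or> (ctl_sat t v \<phi> \<and> (\<exists>c\<in>children t v. ctl_sat t c (EUn \<phi> \<psi>)))"
proof -
  have "(\<exists>j. eu_within t \<phi> \<psi> j v) \<longleftrightarrow>
    ctl_sat t v \<psi> \<or> (ctl_sat t v \<phi> \<and> (\<exists>c\<in>children t v. \<exists>j. eu_within t \<phi> \<psi> j c))"
  proof
    assume "\<exists>j. eu_within t \<phi> \<psi> j v"
    then obtain j where "eu_within t \<phi> \<psi> j v" by blast
    then show "ctl_sat t v \<psi> \<or> (ctl_sat t v \<phi> \<and> (\<exists>c\<in>children t v. \<exists>j. eu_within t \<phi> \<psi> j c))"
      by (cases j) auto
  next
    assume "ctl_sat t v \<psi> \<or> (ctl_sat t v \<phi> \<and> (\<exists>c\<in>children t v. \<exists>j. eu_within t \<phi> \<psi> j c))"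
    then have "eu_within t \<phi> \<psi> 0 v \<or> (\<exists>j. eu_within t \<phi> \<psi> (Suc j) v)" by auto
    then show "\<exists>j. eu_within t \<phi> \<psi> j v" by blast
  qed
  then show ?thesis unfolding ctl_sat_EUn_iff_eu_within .
qed

definition eu_rank :: "'ap set ltree \<Rightarrow> 'ap ctl \<Rightarrow> 'ap ctl \<Rightarrow> nat list \<Rightarrow> nat" where
  "eu_rank t \<phi> \<psi> v = (LEAST j. eu_within t \<phi> \<psi> j v)"

lemma EUn_rank_decreases:
  assumes "ctl_sat t v (EUn \<phi> \<psi>)" "\<not> ctl_sat t v \<psi>"
  shows "ctl_sat t v \<phi> \<and>
    (\<exists>c\<in>children t v. ctl_sat t c (EUn \<phi> \<psi>) \<and> eu_rank t \<phi> \<psi> c < eu_rank t \<phi> \<psi> v)"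
proof -
  have within: "eu_within t \<phi> \<psi> (eu_rank t \<phi> \<psi> v) v"
    using assms(1) unfolding ctl_sat_EUn_iff_eu_within eu_rank_def by (rule LeastI_ex)
  then obtain j where j: "eu_rank t \<phi> \<psi> v = Suc j"
    using assms(2) by (cases "eu_rank t \<phi> \<psi> v") auto
  then obtain c where "c \<in> children t v" "eu_within t \<phi> \<psi> j c" "ctl_sat t v \<phi>"
    using within assms(2) by auto
  moreover from this(2) have "eu_rank t \<phi> \<psi> c \<le> j" unfolding eu_rank_def by (rule Least_le)
  ultimately show ?thesis using j unfolding ctl_sat_EUn_iff_eu_within by auto
qed

lemma not_EUn_if_invariant:
  assumes inv: "\<And>u. u \<in> X \<Longrightarrow> \<not> ctl_sat t u \<psi> \<and> (ctl_sat t u \<phi> \<longrightarrow> children t u \<subseteq> X)"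
    and "v \<in> X"
  shows "\<not> ctl_sat t v (EUn \<phi> \<psi>)"
proof -
  have "\<not> eu_within t \<phi> \<psi> j u" if "u \<in> X" for j u
    using that by (induction j arbitrary: u) (auto dest: inv)
  then show ?thesis using assms(2) unfolding ctl_sat_EUn_iff_eu_within by blast
qed

section \<open>From linear automata to CTL\<close>

definition loop_ctl :: "('q, 'ap::finite) hta \<Rightarrow> ('q \<Rightarrow> 'ap ctl) \<Rightarrow> 'q \<Rightarrow> bool \<Rightarrow> 'ap ctl" where
  "loop_ctl A M q b = ctl_label_case (\<lambda>\<sigma>. pbf_ctl
     (\<lambda>a. if atom_state a = q then (if b then ctl_true else ctl_false) else atom_ctl M a)
     (delta A q \<sigma>))"

lemma ctl_sat_loop_ctl:
  assumes "finite (children t v)" "\<And>a. a \<in> patoms (delta A q (label t v)) \<Longrightarrow> 1 \<le> atom_index a"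
  shows "ctl_sat t v (loop_ctl A M q b) \<longleftrightarrow>
    peval (\<lambda>a. if atom_state a = q then b else atom_sem t (\<lambda>q'. {u. ctl_sat t u (M q')}) v a)
      (delta A q (label t v))"
  unfolding loop_ctl_def ctl_sat_label_case ctl_sat_pbf_ctl
proof (rule peval_cong)
  fix a assume "a \<in> patoms (delta A q (label t v))"
  then show "ctl_sat t v
      (if atom_state a = q then if b then ctl_true else ctl_false else atom_ctl M a) \<longleftrightarrow>
      (if atom_state a = q then b else atom_sem t (\<lambda>q'. {u. ctl_sat t u (M q')}) v a)"
    using ctl_sat_atom_ctl[OF assms] by simp
qed

lemma loop_ctl_cong:
  assumes "\<And>\<sigma> a. a \<in> patoms (delta A q \<sigma>) \<Longrightarrow> atom_state a \<noteq> q \<Longrightarrow> M (atom_state a) = M' (atom_state a)"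
  shows "loop_ctl A M q b = loop_ctl A M' q b"
proof -
  have "pbf_ctl (\<lambda>a. if atom_state a = q then c else atom_ctl M a) (delta A q \<sigma>) =
      pbf_ctl (\<lambda>a. if atom_state a = q then c else atom_ctl M' a) (delta A q \<sigma>)" for \<sigma> c
  proof (rule pbf_ctl_cong)
    fix a assume "a \<in> patoms (delta A q \<sigma>)"
    then show "(if atom_state a = q then c else atom_ctl M a) =
        (if atom_state a = q then c else atom_ctl M' a)"
      using assms atom_ctl_cong[of M a M'] by simp
  qed
  then show ?thesis unfolding loop_ctl_def by simp
qed

text \<open>With \<open>\<psi>\<^sub>b\<close> the transition of \<open>q\<close> whose self-loop atom is read as \<open>b\<close>, the formula
  \<open>E(\<psi>\<^sub>T U \<psi>\<^sub>F)\<close> is the least and \<open>\<not>E(\<not>\<psi>\<^sub>F U \<not>\<psi>\<^sub>F \<and> \<not>\<psi>\<^sub>T)\<close> the greatest solution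
  of \<open>X = \<psi>\<^sub>F \<or> (\<psi>\<^sub>T \<and> loop X)\<close>.\<close>
definition state_ctl :: "('q, 'ap::finite) hta \<Rightarrow> ('q \<Rightarrow> kind) \<Rightarrow> ('q \<Rightarrow> 'ap ctl) \<Rightarrow> 'q \<Rightarrow> 'ap ctl" where
  "state_ctl A kd M q =
    (if q \<notin> states A then ctl_true else
     case kd q of
       Transient \<Rightarrow> loop_ctl A M q False
     | Existential \<Rightarrow> EUn (loop_ctl A M q True) (loop_ctl A M q False)
     | Universal \<Rightarrow> Neg (EUn (Neg (loop_ctl A M q False))
                             (ctl_and (Neg (loop_ctl A M q False)) (Neg (loop_ctl A M q True)))))"

locale finite_ranked_hta = ranked_hta A rank kd for A :: "('q, 'ap::finite) hta" and rank kd
begin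

definition hta_ctl :: "'q \<Rightarrow> 'ap ctl" where "hta_ctl = wfrec (measure rank) (state_ctl A kd)"

abbreviation hta_loop :: "'q \<Rightarrow> bool \<Rightarrow> 'ap ctl" where "hta_loop \<equiv> loop_ctl A hta_ctl"

lemma hta_ctl_unfold: "hta_ctl = state_ctl A kd hta_ctl"
proof -
  have "state_ctl A kd M q = state_ctl A kd M' q"
    if agree: "\<forall>q'. (q', q) \<in> measure rank \<longrightarrow> M q' = M' q'" for M M' q
  proof (cases "q \<in> states A")
    case True
    have "loop_ctl A M q b = loop_ctl A M' q b" for b
      using agree rank_less[OF True] by (intro loop_ctl_cong) simp
    then show ?thesis by (simp add: state_ctl_def split: kind.split)
  qed (simp add: state_ctl_def)
  then have "adm_wf (measure rank) (state_ctl A kd)" unfolding adm_wf_def by blast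
  then show ?thesis unfolding hta_ctl_def by (rule wfrec_fixpoint[OF wf_measure])
qed

lemma hta_ctl_Transient: "q \<in> states A \<Longrightarrow> kd q = Transient \<Longrightarrow> hta_ctl q = hta_loop q False"
  and hta_ctl_Existential: "q \<in> states A \<Longrightarrow> kd q = Existential \<Longrightarrow>
    hta_ctl q = EUn (hta_loop q True) (hta_loop q False)"
  and hta_ctl_Universal: "q \<in> states A \<Longrightarrow> kd q = Universal \<Longrightarrow>
    hta_ctl q = Neg (EUn (Neg (hta_loop q False))
      (ctl_and (Neg (hta_loop q False)) (Neg (hta_loop q True))))"
  by (subst hta_ctl_unfold, simp add: state_ctl_def)+

definition hta_ctl_nodes :: "'ap set ltree \<Rightarrow> 'q \<Rightarrow> nat list set" where
  "hta_ctl_nodes t q = {v. ctl_sat t v (hta_ctl q)}"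

context
  fixes t :: "'ap set ltree"
  assumes t: "sigma_tree t"
begin

lemma ctl_sat_hta_loop:
  assumes "q \<in> states A" "v \<in> nodes t"
  shows "ctl_sat t v (hta_loop q b) \<longleftrightarrow>
    peval (\<lambda>a. if atom_state a = q then b else atom_sem t (hta_ctl_nodes t) v a)
      (delta A q (label t v))"
  using ctl_sat_loop_ctl[OF finite_children[OF t assms(2)] atom_index_pos[OF assms(1)]]
  unfolding hta_ctl_nodes_def .

lemma hta_loop_split:
  assumes q: "q \<in> states A" and v: "v \<in> nodes t"
  shows "peval (atom_sem t ((hta_ctl_nodes t)(q := X)) v) (delta A q (label t v)) \<longleftrightarrow>
    ctl_sat t v (hta_loop q False) \<or>
    (atom_sem t ((hta_ctl_nodes t)(q := X)) v (loop_atom q) \<and> ctl_sat t v (hta_loop q True))"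
proof -
  let ?G = "(hta_ctl_nodes t)(q := X)"
  have "peval (\<lambda>a. if atom_state a = q then b else atom_sem t ?G v a) (delta A q (label t v))
      \<longleftrightarrow> ctl_sat t v (hta_loop q b)" for b
    unfolding ctl_sat_hta_loop[OF q v] by (rule peval_cong) (simp add: atom_sem_fun_upd_other)
  then show ?thesis
    using peval_split_atom[of "delta A q (label t v)" "\<lambda>a. atom_state a = q" "loop_atom q"]
      self_atom_eq_loop_atom[OF q] by blast
qed

lemma hta_ctl_fixpoint:
  assumes q: "q \<in> states A" and v: "v \<in> nodes t"
  shows "v \<in> hta_ctl_nodes t q \<longleftrightarrow> peval (atom_sem t (hta_ctl_nodes t) v) (delta A q (label t v))"
proof (cases "kd q")
  case Transient
  have "peval (atom_sem t (hta_ctl_nodes t) v) (delta A q (label t v))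
    \<longleftrightarrow> ctl_sat t v (hta_loop q False)"
    unfolding ctl_sat_hta_loop[OF q v] using transient_loop_free[OF q Transient]
      by (intro peval_cong) auto
  then show ?thesis unfolding hta_ctl_nodes_def hta_ctl_Transient[OF q Transient] by simp
next
  case Existential
  have "v \<in> hta_ctl_nodes t q \<longleftrightarrow> ctl_sat t v (hta_loop q False) \<or>
      (ctl_sat t v (hta_loop q True) \<and> (\<exists>c\<in>children t v. c \<in> hta_ctl_nodes t q))"
    unfolding hta_ctl_nodes_def hta_ctl_Existential[OF q Existential] mem_Collect_eq
    by (rule ctl_sat_EUn_unfold)
  also have "\<dots> \<longleftrightarrow> peval (atom_sem t (hta_ctl_nodes t) v) (delta A q (label t v))"
    using hta_loop_split[OF q v, of "hta_ctl_nodes t q"] Existential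
    by (auto simp: atom_sem_loop_atom[OF finite_children[OF t v]])
  finally show ?thesis .
next
  case Universal
  have "v \<in> hta_ctl_nodes t q \<longleftrightarrow> ctl_sat t v (hta_loop q False) \<or>
      (ctl_sat t v (hta_loop q True) \<and> children t v \<subseteq> hta_ctl_nodes t q)"
    unfolding hta_ctl_nodes_def hta_ctl_Universal[OF q Universal] mem_Collect_eq ctl_sat.simps(2)
    by (subst ctl_sat_EUn_unfold) auto
  also have "\<dots> \<longleftrightarrow> peval (atom_sem t (hta_ctl_nodes t) v) (delta A q (label t v))"
    using hta_loop_split[OF q v, of "hta_ctl_nodes t q"] Universal
    by (auto simp: atom_sem_loop_atom[OF finite_children[OF t v]])
  finally show ?thesis .
qed

lemma hta_ctl_existential_ranking:
  assumes q: "q \<in> states A" and E: "kd q = Existential"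
  shows "\<exists>lev :: nat list \<Rightarrow> nat. \<forall>v\<in>nodes t. v \<in> hta_ctl_nodes t q \<longrightarrow>
    peval (atom_sem t ((hta_ctl_nodes t)(q := {u \<in> hta_ctl_nodes t q. lev u < lev v})) v)
      (delta A q (label t v))"
proof (intro exI ballI impI)
  let ?lev = "eu_rank t (hta_loop q True) (hta_loop q False)"
  fix v assume v: "v \<in> nodes t" and "v \<in> hta_ctl_nodes t q"
  then have "ctl_sat t v (EUn (hta_loop q True) (hta_loop q False))"
    unfolding hta_ctl_nodes_def hta_ctl_Existential[OF q E] by simp
  then have "ctl_sat t v (hta_loop q False) \<or> (ctl_sat t v (hta_loop q True) \<and>
      (\<exists>c\<in>children t v. c \<in> hta_ctl_nodes t q \<and> ?lev c < ?lev v))"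
    using EUn_rank_decreases unfolding hta_ctl_nodes_def hta_ctl_Existential[OF q E] by auto
  then show "peval (atom_sem t ((hta_ctl_nodes t)(q := {u \<in> hta_ctl_nodes t q. ?lev u < ?lev v})) v)
      (delta A q (label t v))"
    using hta_loop_split[OF q v] E
    by (auto simp: atom_sem_loop_atom[OF finite_children[OF t v]])
qed

lemma hta_ctl_universal_coinduct:
  assumes q: "q \<in> states A" and U: "kd q = Universal" and X: "X \<subseteq> nodes t"
    and post: "\<forall>v\<in>X. peval (atom_sem t ((hta_ctl_nodes t)(q := X)) v) (delta A q (label t v))"
  shows "X \<subseteq> hta_ctl_nodes t q"
proof
  fix v assume "v \<in> X"
  have "ctl_sat t u (hta_loop q False) \<or> (ctl_sat t u (hta_loop q True) \<and> children t u \<subseteq> X)"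
    if "u \<in> X" for u
  proof -
    have u: "u \<in> nodes t" using X that by blast
    show ?thesis
      using post that hta_loop_split[OF q u, of X] U
      by (auto simp: atom_sem_loop_atom[OF finite_children[OF t u]])
  qed
  then have "\<not> ctl_sat t v (EUn (Neg (hta_loop q False))
      (ctl_and (Neg (hta_loop q False)) (Neg (hta_loop q True))))"
    using \<open>v \<in> X\<close> by (intro not_EUn_if_invariant[of X]) auto
  then show "v \<in> hta_ctl_nodes t q" unfolding hta_ctl_nodes_def hta_ctl_Universal[OF q U] by simp
qed

lemma hta_ctl_annotation: "hta_annotation A rank kd t (hta_ctl_nodes t)"
  by (intro hta_annotation.intro ranked_hta_axioms hta_annotation_axioms.intro t
      hta_ctl_fixpoint hta_ctl_existential_ranking hta_ctl_universal_coinduct)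

end

theorem hta_lang_eq_ctl_lang: "hta_lang A = ctl_lang (hta_ctl (init A))"
  using hta_annotation.accepting_run_iff[OF hta_ctl_annotation]
  unfolding hta_lang_def ctl_lang_def hta_ctl_nodes_def by auto

end

section \<open>From CTL to linear automata\<close>

instance ctl :: (countable) countable
  by countable_datatype

primrec subformulas :: "'ap ctl \<Rightarrow> 'ap ctl set" where
  "subformulas (Prop p) = {Prop p}"
| "subformulas (Neg \<phi>) = insert (Neg \<phi>) (subformulas \<phi>)"
| "subformulas (Or \<phi> \<psi>) = insert (Or \<phi> \<psi>) (subformulas \<phi> \<union> subformulas \<psi>)"
| "subformulas (Dn n \<phi>) = insert (Dn n \<phi>) (subformulas \<phi>)"
| "subformulas (EXn \<phi>) = insert (EXn \<phi>) (subformulas \<phi>)"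
| "subformulas (EUn \<phi> \<psi>) = insert (EUn \<phi> \<psi>) (subformulas \<phi> \<union> subformulas \<psi>)"

lemma finite_subformulas: "finite (subformulas \<phi>)"
  by (induction \<phi>) auto

lemma subformulas_refl: "\<phi> \<in> subformulas \<phi>"
  by (cases \<phi>) auto

lemma subformulas_trans: "\<psi> \<in> subformulas \<phi> \<Longrightarrow> subformulas \<psi> \<subseteq> subformulas \<phi>"
  by (induction \<phi>) auto

lemma size_subformula: "\<psi> \<in> subformulas \<phi> \<Longrightarrow> size \<psi> \<le> size \<phi>"
  by (induction \<phi>) auto

lemma size_proper_subformula: "\<psi> \<in> subformulas \<phi> \<Longrightarrow> \<psi> \<noteq> \<phi> \<Longrightarrow> size \<psi> < size \<phi>"
  by (cases \<phi>) (auto dest: size_subformula)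

definition ctl_state :: "'ap::countable ctl \<Rightarrow> bool \<Rightarrow> nat" where
  "ctl_state \<phi> b = to_nat (\<phi>, b)"

lemma ctl_state_eq_iff [simp]: "ctl_state \<phi> b = ctl_state \<psi> c \<longleftrightarrow> \<phi> = \<psi> \<and> b = c"
  unfolding ctl_state_def by simp

text \<open>The state \<open>ctl_state \<psi> b\<close> asserts that \<open>\<psi>\<close> has truth value \<open>b\<close>; negations are pushed
  inwards, and only an until formula refers back to its own state.\<close>
primrec ctl_delta :: "'ap::countable ctl \<Rightarrow> bool \<Rightarrow> 'ap set \<Rightarrow> nat atom pbf" where
  "ctl_delta (Prop p) b \<sigma> = (if (p \<in> \<sigma>) = b then PTrue else PFalse)"
| "ctl_delta (Neg \<phi>) b \<sigma> = ctl_delta \<phi> (\<not> b) \<sigma>"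
| "ctl_delta (Or \<phi> \<psi>) b \<sigma> =
    (if b then POr (ctl_delta \<phi> b \<sigma>) (ctl_delta \<psi> b \<sigma>)
      else PAnd (ctl_delta \<phi> b \<sigma>) (ctl_delta \<psi> b \<sigma>))"
| "ctl_delta (Dn n \<phi>) b \<sigma> =
    (if n = 0 then (if b then PTrue else PFalse)
     else if b then PAtom (Dia n (ctl_state \<phi> True)) else PAtom (Box n (ctl_state \<phi> False)))"
| "ctl_delta (EXn \<phi>) b \<sigma> =
    (if b then PAtom (Dia 1 (ctl_state \<phi> True)) else PAtom (Box 1 (ctl_state \<phi> False)))"
| "ctl_delta (EUn \<phi> \<psi>) b \<sigma> =
    (if b then POr (ctl_delta \<psi> True \<sigma>)
                   (PAnd (ctl_delta \<phi> True \<sigma>) (PAtom (Dia 1 (ctl_state (EUn \<phi> \<psi>) True))))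
     else PAnd (ctl_delta \<psi> False \<sigma>)
                (POr (ctl_delta \<phi> False \<sigma>) (PAtom (Box 1 (ctl_state (EUn \<phi> \<psi>) False)))))"

lemma ctl_delta_atom_state:
  "a \<in> patoms (ctl_delta \<psi> b \<sigma>) \<Longrightarrow>
    \<exists>\<psi>' b'. atom_state a = ctl_state \<psi>' b' \<and> \<psi>' \<in> subformulas \<psi> \<and> 1 \<le> atom_index a"
proof (induction \<psi> arbitrary: b)
  case (Neg \<phi>)
  then show ?case by fastforce
next
  case (Or \<phi>1 \<phi>2)
  then have "a \<in> patoms (ctl_delta \<phi>1 b \<sigma>) \<or> a \<in> patoms (ctl_delta \<phi>2 b \<sigma>)" by (cases b) auto
  then obtain \<psi>' b' where "atom_state a = ctl_state \<psi>' b'" "1 \<le> atom_index a"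
    "\<psi>' \<in> subformulas \<phi>1 \<or> \<psi>' \<in> subformulas \<phi>2"
    using Or.IH by blast
  then show ?case by auto
next
  case (EUn \<phi>1 \<phi>2)
  then consider "a \<in> patoms (ctl_delta \<phi>1 b \<sigma>) \<or> a \<in> patoms (ctl_delta \<phi>2 b \<sigma>)"
    | "atom_state a = ctl_state (EUn \<phi>1 \<phi>2) b" "atom_index a = 1"
    by (cases b) auto
  then show ?case
  proof cases
    case 1
    then obtain \<psi>' b' where "atom_state a = ctl_state \<psi>' b'" "1 \<le> atom_index a"
      "\<psi>' \<in> subformulas \<phi>1 \<or> \<psi>' \<in> subformulas \<phi>2"
      using EUn.IH by blast
    then show ?thesis by auto
  qed auto
qed (auto simp: subformulas_refl split: if_splits)

lemma ctl_delta_atom_smaller: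
  fixes \<psi> \<chi> :: "'ap::countable ctl"
  assumes "a \<in> patoms (ctl_delta \<psi> b \<sigma>)" "size \<psi> < size \<chi>"
  shows "atom_state a \<noteq> ctl_state \<chi> b'"
proof
  assume "atom_state a = ctl_state \<chi> b'"
  with ctl_delta_atom_state[OF assms(1)] have "\<chi> \<in> subformulas \<psi>" by auto
  then show False using size_subformula assms(2) by (auto dest: size_subformula)
qed

lemma ctl_delta_self_atom:
  assumes "a \<in> patoms (ctl_delta \<psi> b \<sigma>)" "atom_state a = ctl_state \<psi> b'"
  shows "b' = b \<and> (\<exists>\<phi>1 \<phi>2. \<psi> = EUn \<phi>1 \<phi>2) \<and>
    a = (if b then Dia 1 (ctl_state \<psi> True) else Box 1 (ctl_state \<psi> False))"
  using assms by (cases \<psi>) (auto split: if_splits dest: ctl_delta_atom_smaller[where \<chi> = \<psi>])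

definition ctl_hta :: "'ap::countable ctl \<Rightarrow> (nat, 'ap) hta" where
  "ctl_hta \<phi> = \<lparr>states = (\<lambda>(\<psi>, b). ctl_state \<psi> b) ` (subformulas \<phi> \<times> UNIV),
     delta = \<lambda>c. case_prod ctl_delta (from_nat c :: 'ap ctl \<times> bool),
     init = ctl_state \<phi> True,
     acc = (\<lambda>\<psi>. ctl_state \<psi> False) ` {\<psi> \<in> subformulas \<phi>. \<exists>\<phi>1 \<phi>2. \<psi> = EUn \<phi>1 \<phi>2}\<rparr>"

lemma ctl_hta_simps [simp]:
  "init (ctl_hta \<phi>) = ctl_state \<phi> True"
  "delta (ctl_hta \<phi>) (ctl_state \<psi> b) = ctl_delta \<psi> b"
  "ctl_state \<psi> b \<in> states (ctl_hta \<phi>) \<longleftrightarrow> \<psi> \<in> subformulas \<phi>"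
  "ctl_state \<psi> b \<in> acc (ctl_hta \<phi>) \<longleftrightarrow> \<psi> \<in> subformulas \<phi> \<and> (\<exists>\<phi>1 \<phi>2. \<psi> = EUn \<phi>1 \<phi>2) \<and> \<not> b"
  by (auto simp: ctl_hta_def ctl_state_def)

lemma ctl_hta_statesE:
  assumes "q \<in> states (ctl_hta \<phi>)"
  obtains \<psi> b where "q = ctl_state \<psi> b" "\<psi> \<in> subformulas \<phi>"
  using assms unfolding ctl_hta_def by auto

lemma finite_ctl_hta_states: "finite (states (ctl_hta \<phi>))"
  unfolding ctl_hta_def by (simp add: finite_subformulas finite_cartesian_product)

lemma ctl_hta_wf: "hta_wf (ctl_hta \<phi>)"
  unfolding hta_wf_def
proof (intro conjI ballI allI)
  show "finite (states (ctl_hta \<phi>))" by (rule finite_ctl_hta_states)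
  show "init (ctl_hta \<phi>) \<in> states (ctl_hta \<phi>)" by (simp add: subformulas_refl)
  show "acc (ctl_hta \<phi>) \<subseteq> states (ctl_hta \<phi>)" unfolding ctl_hta_def by auto
  fix q \<sigma> a assume q: "q \<in> states (ctl_hta \<phi>)" and a: "a \<in> patoms (delta (ctl_hta \<phi>) q \<sigma>)"
  obtain \<psi> b where "q = ctl_state \<psi> b" "\<psi> \<in> subformulas \<phi>" using q by (rule ctl_hta_statesE)
  then show "atom_state a \<in> states (ctl_hta \<phi>)" "1 \<le> atom_index a"
    using ctl_delta_atom_state[of a \<psi> b \<sigma>] a subformulas_trans by fastforce+
qed

fun formula_kind :: "'ap ctl \<Rightarrow> bool \<Rightarrow> kind" where
  "formula_kind (EUn \<phi> \<psi>) b = (if b then Existential else Universal)"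
| "formula_kind _ b = Transient"

definition ctl_kind :: "'ap::countable ctl \<Rightarrow> nat \<Rightarrow> kind" where
  "ctl_kind \<phi> c = case_prod formula_kind (from_nat c :: 'ap ctl \<times> bool)"

text \<open>States are compared first by the size of their formula; adding the state itself, which is
  below the bound \<open>Suc (Max \<dots>)\<close>, makes the rank injective.\<close>
definition ctl_rank :: "'ap::countable ctl \<Rightarrow> nat \<Rightarrow> nat" where
  "ctl_rank \<phi> c = size (fst (from_nat c :: 'ap ctl \<times> bool)) * Suc (Max (states (ctl_hta \<phi>))) + c"

lemma ctl_kind_ctl_state [simp]:
  fixes \<phi> \<psi> :: "'ap::countable ctl"
  shows "ctl_kind \<phi> (ctl_state \<psi> b) = formula_kind \<psi> b"
  by (simp add: ctl_kind_def ctl_state_def)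

lemma ctl_rank_ctl_state:
  fixes \<phi> \<psi> :: "'ap::countable ctl"
  shows "ctl_rank \<phi> (ctl_state \<psi> b) = size \<psi> * Suc (Max (states (ctl_hta \<phi>))) + ctl_state \<psi> b"
  by (simp add: ctl_rank_def ctl_state_def)

lemma ctl_hta_state_less: "c \<in> states (ctl_hta \<phi>) \<Longrightarrow> c < Suc (Max (states (ctl_hta \<phi>)))"
  by (simp add: Max_ge finite_ctl_hta_states le_imp_less_Suc)

lemma ctl_rank_inj: "inj_on (ctl_rank \<phi>) (states (ctl_hta \<phi>))"
proof (rule inj_onI)
  define B where "B = Suc (Max (states (ctl_hta \<phi>)))"
  fix c c' assume "c \<in> states (ctl_hta \<phi>)" "c' \<in> states (ctl_hta \<phi>)" "ctl_rank \<phi> c = ctl_rank \<phi> c'"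
  then have "c < B" "c' < B" unfolding B_def by (simp_all add: ctl_hta_state_less)
  with \<open>ctl_rank \<phi> c = ctl_rank \<phi> c'\<close> show "c = c'"
    unfolding ctl_rank_def B_def[symmetric] by (metis mod_mult_self3 mod_less)
qed

lemma ctl_rank_mono:
  assumes q: "q \<in> states (ctl_hta \<phi>)" and a: "a \<in> patoms (delta (ctl_hta \<phi>) q \<sigma>)"
  shows "ctl_rank \<phi> (atom_state a) \<le> ctl_rank \<phi> q"
proof -
  define B where "B = Suc (Max (states (ctl_hta \<phi>)))"
  obtain \<psi> b where q_def: "q = ctl_state \<psi> b" and "\<psi> \<in> subformulas \<phi>"
    using q by (rule ctl_hta_statesE)
  then have a': "a \<in> patoms (ctl_delta \<psi> b \<sigma>)" using a by simp
  then obtain \<psi>' b' where state: "atom_state a = ctl_state \<psi>' b'" and "\<psi>' \<in> subformulas \<psi>"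
    using ctl_delta_atom_state by blast
  show ?thesis
  proof (cases "\<psi>' = \<psi>")
    case True
    then show ?thesis using ctl_delta_self_atom[OF a'] state q_def by simp
  next
    case False
    then have "Suc (size \<psi>') \<le> size \<psi>"
      using size_proper_subformula \<open>\<psi>' \<in> subformulas \<psi>\<close> by fastforce
    then have "Suc (size \<psi>') * B \<le> size \<psi> * B" by (rule mult_le_mono1)
    moreover have "atom_state a \<in> states (ctl_hta \<phi>)" using ctl_hta_wf q a unfolding hta_wf_def
      by blast
    then have "atom_state a < B" unfolding B_def by (rule ctl_hta_state_less)
    ultimately show ?thesis unfolding q_def state ctl_rank_ctl_state B_def[symmetric] by simp
  qed
qed

lemma ctl_hta_self_atom:
  assumes q: "q \<in> states (ctl_hta \<phi>)" and a: "a \<in> patoms (delta (ctl_hta \<phi>) q \<sigma>)"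
    and self: "atom_state a = q"
  shows "ctl_kind \<phi> q \<noteq> Transient" "a = (if ctl_kind \<phi> q = Existential then Dia 1 q else Box 1 q)"
proof -
  obtain \<psi> b where q_def: "q = ctl_state \<psi> b" and "\<psi> \<in> subformulas \<phi>"
    using q by (rule ctl_hta_statesE)
  then have "a \<in> patoms (ctl_delta \<psi> b \<sigma>)" using a by simp
  from ctl_delta_self_atom[OF this self[unfolded q_def]] obtain \<phi>1 \<phi>2 where
    \<psi>: "\<psi> = EUn \<phi>1 \<phi>2" and a_eq: "a = (if b then Dia 1 (ctl_state \<psi> True)
      else Box 1 (ctl_state \<psi> False))"
    by blast
  have kind: "ctl_kind \<phi> q = (if b then Existential else Universal)" using q_def \<psi> by simp
  then show "ctl_kind \<phi> q \<noteq> Transient" by simp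
  show "a = (if ctl_kind \<phi> q = Existential then Dia 1 q else Box 1 q)"
    using kind a_eq q_def by simp
qed

lemma ctl_hta_ranked: "ranked_hta (ctl_hta \<phi>) (ctl_rank \<phi>) (ctl_kind \<phi>)"
proof
  show "hta_wf (ctl_hta \<phi>)" by (rule ctl_hta_wf)
  show "inj_on (ctl_rank \<phi>) (states (ctl_hta \<phi>))" by (rule ctl_rank_inj)
  fix q \<sigma> a assume q: "q \<in> states (ctl_hta \<phi>)"
  show "a \<in> patoms (delta (ctl_hta \<phi>) q \<sigma>) \<Longrightarrow> ctl_rank \<phi> (atom_state a) \<le> ctl_rank \<phi> q"
    using q by (rule ctl_rank_mono)
  show "ctl_kind \<phi> q = Transient \<Longrightarrow> a \<in> patoms (delta (ctl_hta \<phi>) q \<sigma>) \<Longrightarrow> atom_state a \<noteq> q"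
    using ctl_hta_self_atom(1)[OF q] by blast
  show "ctl_kind \<phi> q = Existential \<Longrightarrow> a \<in> patoms (delta (ctl_hta \<phi>) q \<sigma>) \<Longrightarrow>
      atom_state a = q \<Longrightarrow> a = Dia 1 q"
    and "ctl_kind \<phi> q = Universal \<Longrightarrow> a \<in> patoms (delta (ctl_hta \<phi>) q \<sigma>) \<Longrightarrow>
      atom_state a = q \<Longrightarrow> a = Box 1 q"
    using ctl_hta_self_atom(2)[OF q] by auto
  obtain \<psi> b where "q = ctl_state \<psi> b" "\<psi> \<in> subformulas \<phi>" using q by (rule ctl_hta_statesE)
  then show "ctl_kind \<phi> q = Existential \<Longrightarrow> q \<notin> acc (ctl_hta \<phi>)"
    and "ctl_kind \<phi> q = Universal \<Longrightarrow> q \<in> acc (ctl_hta \<phi>)"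
    by (cases \<psi>; simp split: if_splits)+
qed

lemma ctl_delta_EUn_single_loop_clauses:
  fixes \<phi>1 \<phi>2 :: "'ap::countable ctl"
  shows "c \<in> dnf (ctl_delta (EUn \<phi>1 \<phi>2) True \<sigma>) \<Longrightarrow>
      card {a \<in> c. atom_state a = ctl_state (EUn \<phi>1 \<phi>2) True} \<le> 1"
    and "c \<in> cnf (ctl_delta (EUn \<phi>1 \<phi>2) False \<sigma>) \<Longrightarrow>
      card {a \<in> c. atom_state a = ctl_state (EUn \<phi>1 \<phi>2) False} \<le> 1"
proof -
  have other: "atom_state a \<noteq> ctl_state (EUn \<phi>1 \<phi>2) b"
    if "a \<in> patoms (ctl_delta \<phi>1 b' \<sigma>) \<or> a \<in> patoms (ctl_delta \<phi>2 b' \<sigma>)" for a b b'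
    using that ctl_delta_atom_smaller[of a _ b' \<sigma> "EUn \<phi>1 \<phi>2" b] by fastforce
  show "c \<in> dnf (ctl_delta (EUn \<phi>1 \<phi>2) True \<sigma>) \<Longrightarrow>
      card {a \<in> c. atom_state a = ctl_state (EUn \<phi>1 \<phi>2) True} \<le> 1"
    using other dnf_subset_patoms by (intro card_filter_le_1) fastforce
  show "c \<in> cnf (ctl_delta (EUn \<phi>1 \<phi>2) False \<sigma>) \<Longrightarrow>
      card {a \<in> c. atom_state a = ctl_state (EUn \<phi>1 \<phi>2) False} \<le> 1"
    using other cnf_subset_patoms by (intro card_filter_le_1) fastforce
qed

lemma ctl_hta_EUn_state:
  fixes \<phi> :: "'ap::countable ctl"
  assumes "q \<in> states (ctl_hta \<phi>)"
  shows "ctl_kind \<phi> q = Existential \<Longrightarrow> \<exists>\<phi>1 \<phi>2 :: 'ap ctl. q = ctl_state (EUn \<phi>1 \<phi>2) True"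
    and "ctl_kind \<phi> q = Universal \<Longrightarrow> \<exists>\<phi>1 \<phi>2 :: 'ap ctl. q = ctl_state (EUn \<phi>1 \<phi>2) False"
proof -
  obtain \<psi> b where "q = ctl_state \<psi> b" "\<psi> \<in> subformulas \<phi>" using assms by (rule ctl_hta_statesE)
  then show "ctl_kind \<phi> q = Existential \<Longrightarrow> \<exists>\<phi>1 \<phi>2 :: 'ap ctl. q = ctl_state (EUn \<phi>1 \<phi>2) True"
    and "ctl_kind \<phi> q = Universal \<Longrightarrow> \<exists>\<phi>1 \<phi>2 :: 'ap ctl. q = ctl_state (EUn \<phi>1 \<phi>2) False"
    by (cases \<psi>; auto split: if_splits)+
qed

lemma ctl_hta_linear:
  fixes \<phi> :: "'ap::countable ctl"
  shows "linear_hta (ctl_hta \<phi>)"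
proof (rule ranked_hta.linear_hta_if_single_loop_clauses[OF ctl_hta_ranked])
  fix q \<sigma> c assume q: "q \<in> states (ctl_hta \<phi>)"
  show "card {a \<in> c. atom_state a = q} \<le> 1"
    if kind: "ctl_kind \<phi> q = Existential" and clause: "c \<in> dnf (delta (ctl_hta \<phi>) q \<sigma>)"
  proof -
    obtain \<phi>1 \<phi>2 :: "'ap ctl" where q_def: "q = ctl_state (EUn \<phi>1 \<phi>2) True"
      using ctl_hta_EUn_state(1)[OF q kind] by blast
    show ?thesis using clause unfolding q_def ctl_hta_simps
      by (rule ctl_delta_EUn_single_loop_clauses(1))
  qed
  show "card {a \<in> c. atom_state a = q} \<le> 1"
    if kind: "ctl_kind \<phi> q = Universal" and clause: "c \<in> cnf (delta (ctl_hta \<phi>) q \<sigma>)"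
  proof -
    obtain \<phi>1 \<phi>2 :: "'ap ctl" where q_def: "q = ctl_state (EUn \<phi>1 \<phi>2) False"
      using ctl_hta_EUn_state(2)[OF q kind] by blast
    show ?thesis using clause unfolding q_def ctl_hta_simps
      by (rule ctl_delta_EUn_single_loop_clauses(2))
  qed
qed

definition truth_nodes :: "'ap::countable set ltree \<Rightarrow> nat \<Rightarrow> nat list set" where
  "truth_nodes t c = (case from_nat c of (\<psi>, b) \<Rightarrow> {u. ctl_sat t u \<psi> = b})"

lemma truth_nodes_ctl_state [simp]: "truth_nodes t (ctl_state \<psi> b) = {u. ctl_sat t u \<psi> = b}"
  by (simp add: truth_nodes_def ctl_state_def)

lemma peval_ctl_delta:
  assumes fin: "finite (children t v)"
  shows "peval (atom_sem t (truth_nodes t) v) (ctl_delta \<psi> b (label t v)) \<longleftrightarrow> (ctl_sat t v \<psi> = b)"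
proof (induction \<psi> arbitrary: b)
  case (Dn n \<phi>)
  have "children t v \<inter> {u. ctl_sat t u \<phi>} = {u \<in> children t v. ctl_sat t u \<phi>}"
    "children t v - {u. \<not> ctl_sat t u \<phi>} = {u \<in> children t v. ctl_sat t u \<phi>}" by auto
  then show ?case by (cases b) auto
next
  case (EXn \<phi>)
  show ?case
    by (cases b; simp only: ctl_delta.simps peval.simps if_True if_False truth_nodes_ctl_state
        atom_sem_Dia1[OF fin] atom_sem_Box1[OF fin]; auto)
next
  case (EUn \<phi> \<psi>)
  show ?case
    by (cases b; simp only: ctl_delta.simps peval.simps if_True if_False truth_nodes_ctl_state
        atom_sem_Dia1[OF fin] atom_sem_Box1[OF fin] EUn.IH ctl_sat_EUn_unfold[of t v \<phi> \<psi>]; auto)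
next
  case (Or \<phi>1 \<phi>2)
  then show ?case by (cases b) auto
qed auto

lemma peval_ctl_delta_fun_upd:
  fixes \<psi> \<chi> :: "'ap::countable ctl"
  assumes "size \<psi> < size \<chi>"
  shows "peval (atom_sem t (G(ctl_state \<chi> c := X)) v) (ctl_delta \<psi> b \<sigma>) =
    peval (atom_sem t G v) (ctl_delta \<psi> b \<sigma>)"
  by (rule peval_cong) (simp add: atom_sem_fun_upd_other ctl_delta_atom_smaller[OF _ assms])

lemma peval_ctl_delta_EUn_fun_upd:
  assumes fin: "finite (children t v)"
  shows "peval (atom_sem t ((truth_nodes t)(ctl_state (EUn \<phi> \<psi>) b := X)) v)
      (ctl_delta (EUn \<phi> \<psi>) b (label t v))
    \<longleftrightarrow> (if b then ctl_sat t v \<psi> \<or> (ctl_sat t v \<phi> \<and> (\<exists>c\<in>children t v. c \<in> X))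
         else \<not> ctl_sat t v \<psi> \<and> (\<not> ctl_sat t v \<phi> \<or> children t v \<subseteq> X))"
proof -
  let ?G = "(truth_nodes t)(ctl_state (EUn \<phi> \<psi>) b := X)"
  have "peval (atom_sem t ?G v) (ctl_delta \<chi> b' (label t v)) \<longleftrightarrow> (ctl_sat t v \<chi> = b')"
    if "\<chi> = \<phi> \<or> \<chi> = \<psi>" for \<chi> b'
  proof -
    have smaller: "size \<chi> < size (EUn \<phi> \<psi>)" using that by auto
    show ?thesis by (subst peval_ctl_delta_fun_upd[OF smaller]) (rule peval_ctl_delta[OF fin])
  qed
  then show ?thesis
    by (cases b; simp only: ctl_delta.simps peval.simps if_True if_False
        atom_sem_Dia1[OF fin] atom_sem_Box1[OF fin] fun_upd_same; auto)
qed

context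
  fixes \<phi> :: "'ap::countable ctl" and t :: "'ap set ltree"
  assumes t: "sigma_tree t"
begin

lemma ctl_hta_existential_ranking:
  assumes q: "q \<in> states (ctl_hta \<phi>)" and E: "ctl_kind \<phi> q = Existential"
  shows "\<exists>lev :: nat list \<Rightarrow> nat. \<forall>v\<in>nodes t. v \<in> truth_nodes t q \<longrightarrow>
    peval (atom_sem t ((truth_nodes t)(q := {u \<in> truth_nodes t q. lev u < lev v})) v)
      (delta (ctl_hta \<phi>) q (label t v))"
proof -
  obtain \<phi>1 \<phi>2 :: "'ap ctl" where q_def: "q = ctl_state (EUn \<phi>1 \<phi>2) True"
    using ctl_hta_EUn_state(1)[OF q E] by blast
  show ?thesis
  proof (intro exI ballI impI)
    let ?lev = "eu_rank t \<phi>1 \<phi>2"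
    fix v assume v: "v \<in> nodes t" "v \<in> truth_nodes t q"
    then have "ctl_sat t v \<phi>2 \<or>
        (ctl_sat t v \<phi>1 \<and> (\<exists>c\<in>children t v. c \<in> truth_nodes t q \<and> ?lev c < ?lev v))"
      using EUn_rank_decreases[of t v \<phi>1 \<phi>2] unfolding q_def by auto
    then show "peval (atom_sem t ((truth_nodes t)(q := {u \<in> truth_nodes t q. ?lev u < ?lev v})) v)
        (delta (ctl_hta \<phi>) q (label t v))"
      unfolding q_def ctl_hta_simps peval_ctl_delta_EUn_fun_upd[OF finite_children[OF t v(1)]]
        by auto
  qed
qed

lemma ctl_hta_universal_coinduct:
  assumes q: "q \<in> states (ctl_hta \<phi>)" and U: "ctl_kind \<phi> q = Universal" and X: "X \<subseteq> nodes t"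
    and post: "\<forall>v\<in>X. peval (atom_sem t ((truth_nodes t)(q := X)) v)
      (delta (ctl_hta \<phi>) q (label t v))"
  shows "X \<subseteq> truth_nodes t q"
proof -
  obtain \<phi>1 \<phi>2 :: "'ap ctl" where q_def: "q = ctl_state (EUn \<phi>1 \<phi>2) False"
    using ctl_hta_EUn_state(2)[OF q U] by blast
  have inv: "\<not> ctl_sat t u \<phi>2 \<and> (ctl_sat t u \<phi>1 \<longrightarrow> children t u \<subseteq> X)" if "u \<in> X" for u
    using post that X peval_ctl_delta_EUn_fun_upd[OF finite_children[OF t], of u \<phi>1 \<phi>2 False X]
    unfolding q_def by auto
  show ?thesis
  proof
    fix v assume "v \<in> X"
    then show "v \<in> truth_nodes t q"
      unfolding q_def using not_EUn_if_invariant[of X t \<phi>2 \<phi>1, OF inv] by simp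
  qed
qed

lemma ctl_hta_annotation: "hta_annotation (ctl_hta \<phi>) (ctl_rank \<phi>) (ctl_kind \<phi>) t (truth_nodes t)"
proof (intro hta_annotation.intro ctl_hta_ranked hta_annotation_axioms.intro t
    ctl_hta_existential_ranking ctl_hta_universal_coinduct)
  fix q v assume "q \<in> states (ctl_hta \<phi>)" "v \<in> nodes t"
  then show "v \<in> truth_nodes t q \<longleftrightarrow> peval (atom_sem t (truth_nodes t) v)
    (delta (ctl_hta \<phi>) q (label t v))"
    by (auto elim!: ctl_hta_statesE simp: peval_ctl_delta finite_children[OF t])
qed

end

theorem ctl_hta_lang: "hta_lang (ctl_hta \<phi>) = ctl_lang \<phi>"
  using hta_annotation.accepting_run_iff[OF ctl_hta_annotation]
  unfolding hta_lang_def ctl_lang_def by auto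

theorem theorem5p5:
  fixes dummy :: "'ap::finite"
  shows "(\<forall>A :: ('q, 'ap) hta. linear_hta A \<longrightarrow> (\<exists>\<phi> :: 'ap ctl. hta_lang A = ctl_lang \<phi>))
       \<and> (\<forall>\<phi> :: 'ap ctl. \<exists>A :: (nat, 'ap) hta. linear_hta A \<and> hta_lang A = ctl_lang \<phi>)"
proof (intro conjI allI impI)
  fix A :: "('q, 'ap) hta"
  assume "linear_hta A"
  then obtain rank kd where "ranked_hta A rank kd" using linear_hta_imp_ranked_hta by blast
  then interpret finite_ranked_hta A rank kd by (rule finite_ranked_hta.intro)
  show "\<exists>\<phi> :: 'ap ctl. hta_lang A = ctl_lang \<phi>" using hta_lang_eq_ctl_lang by blast
next
  fix \<phi> :: "'ap ctl"
  show "\<exists>A :: (nat, 'ap) hta. linear_hta A \<and> hta_lang A = ctl_lang \<phi>"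
    using ctl_hta_linear ctl_hta_lang by blast
qed

end
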